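(* Let $q=p^h$ with $p$ an odd prime. In ${\rm PG}(4,q)$ with homogeneous coordinates $(X_1,\dots,X_5)$, let $\pi$ be the plane $X_4=X_5=0$, let $\ell$ be the line $X_3=X_4=X_5=0$, let $\omega$ be a primitive element of ${\rm GF}(q)$, and for $1\le i\le q+1$ let $\Pi_i$ be the solid with equation $X_4=\omega^{i-1}X_5$ if $1\le i\le q-1$, $X_4=0$ if $i=q$, and $X_5=0$ if $i=q+1$. Let $a,b,c\in{\rm GF}(q)$ be such that $X^3+aX^2+bX+c$ is irreducible over ${\rm GF}(q)$, and let $G=\{M_{r,s,t}: r,s,t\in{\rm GF}(q)\}$ where $$M_{r,s,t}=\begin{pmatrix}1&0&r&r^2-ar+s&t\\0&1&s&2rs-t&s^2+bs-cr\\0&0&1&2r&2s\\0&0&0&1&0\\0&0&0&0&1\end{pmatrix},$$ acting on ${\rm PG}(4,q)$ (points written as column vectors) by left multiplication. Then the orbits of $G$ on the lines of ${\rm PG}(4,q)$ distinct from $\ell$ are the following: (a) $q+1$ orbits of size $q$: for each point $P\in\ell$, the set of lines of $\pi$ through $P$ other than $\ell$; (b) $(q+1)^2$ orbits of size $q^2$: for each $i\in\{1,\dots,q+1\}$ and each point $P\in\ell$, the set of lines of $\Pi_i$ through $P$ not contained in $\pi$; (c) $q(q+1)$ orbits of size $q^3$: for each $i$, the lines of $\Pi_i$ that are skew to $\ell$ but meet $\pi$ in a point form $q$ orbits of size $q^3$; (d) $q^3$ orbits of size $q^3$, whose union is the set of lines disjoint from $\pi$. Moreover, each orbit of type (d)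 is a partial line spread, i.e. its lines are pairwise disjoint. *)

theory Defs
  imports "HOL-Analysis.Analysis" "HOL-Computational_Algebra.Polynomial"
          "HOL-Computational_Algebra.Factorial_Ring"
begin

text \<open>PG(4,q) over a finite field 'a: vectors are 'a^5 and a projective
  subspace of projective dimension k-1 is a (linear) subspace of dimension k.\<close>

definition coord :: "nat \<Rightarrow> 5" where
  "coord k = of_nat (k - 1)"

definition X :: "nat \<Rightarrow> 'a ^ 5 \<Rightarrow> 'a" where
  "X k v = v $ coord k"

definition idx :: "5 \<Rightarrow> nat" where
  "idx i = (THE k. k < 5 \<and> (of_nat k :: 5) = i)"

definition pg_sub :: "nat \<Rightarrow> ('a::field ^ 5) set \<Rightarrow> bool" where
  "pg_sub k U \<longleftrightarrow> vec.subspace U \<and> vec.dim U = k"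

abbreviation pg_point :: "('a::field ^ 5) set \<Rightarrow> bool" where "pg_point \<equiv> pg_sub 1"
abbreviation pg_line  :: "('a::field ^ 5) set \<Rightarrow> bool" where "pg_line \<equiv> pg_sub 2"

definition pg_lines :: "('a::field ^ 5) set set" where
  "pg_lines = {L. pg_line L}"

definition piP :: "('a::field ^ 5) set" where
  "piP = {v. X 4 v = 0 \<and> X 5 v = 0}"

definition ellL :: "('a::field ^ 5) set" where
  "ellL = {v. X 3 v = 0 \<and> X 4 v = 0 \<and> X 5 v = 0}"

definition Solid :: "'a::{field,finite} \<Rightarrow> nat \<Rightarrow> ('a ^ 5) set" where
  "Solid \<omega> i =
     (if 1 \<le> i \<and> i \<le> CARD('a) - 1 then {v. X 4 v = \<omega> ^ (i - 1) * X 5 v}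
      else if i = CARD('a) then {v. X 4 v = 0}
      else {v. X 5 v = 0})"

definition primitive_element :: "'a::{field,finite} \<Rightarrow> bool" where
  "primitive_element \<omega> \<longleftrightarrow> {\<omega> ^ k | k. True} = UNIV - {0}"

definition Mrst :: "'a::field \<Rightarrow> 'a \<Rightarrow> 'a \<Rightarrow> 'a \<Rightarrow> 'a \<Rightarrow> 'a \<Rightarrow> 'a ^ 5 ^ 5" where
  "Mrst a b c r s t =
    (\<chi> i j. [[1, 0, r, r^2 - a * r + s, t],
             [0, 1, s, 2 * r * s - t, s^2 + b * s - c * r],
             [0, 0, 1, 2 * r, 2 * s],
             [0, 0, 0, 1, 0],
             [0, 0, 0, 0, 1]] ! idx i ! idx j)"

definition act :: "'a::field ^ 5 ^ 5 \<Rightarrow> ('a ^ 5) set \<Rightarrow> ('a ^ 5) set" where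
  "act M U = (\<lambda>v. M *v v) ` U"

definition G_orbit :: "'a::field \<Rightarrow> 'a \<Rightarrow> 'a \<Rightarrow> ('a ^ 5) set \<Rightarrow> ('a ^ 5) set set" where
  "G_orbit a b c L = {act (Mrst a b c r s t) L | r s t. True}"

end

(*
  Every M_{r,s,t} fixes the line ell pointwise and preserves X4 and X5, so it fixes pi and each
  solid Pi_i through pi. Hence the lines other than ell fall into four invariant classes:
  (a) lines of pi through a point of ell, (b) lines of some Pi_i through a point of ell and not in
  pi, (c) lines of some Pi_i skew to ell and meeting pi in a point, (d) lines skew to pi. Each class
  has coordinate normal forms on which M_{r,s,t} acts by explicit substitutions. On (a) and (b)
  the action is transitive; for (b) this uses that the cubic form X^3 + a X^2 Y + b X Y^2 + c Y^3 has
  no nontrivial zero. On the lines of type (c) in one solid the orbits are the q level sets of a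
  quadratic invariant, and on (d) the action is free, each orbit containing exactly one line
  spanned by (x1, x2, 0, 1, 0) and (0, y2, 0, 0, 1). Finally a nonidentity element of G fixes no
  point outside pi, again because the cubic form is anisotropic, so two distinct lines of one
  orbit of type (d) are disjoint.
*)

theory Submission
  imports Defs
begin

lemma exhaust_5:
  fixes x :: 5
  shows "x = 0 \<or> x = 1 \<or> x = 2 \<or> x = 3 \<or> x = 4"
proof (induct x)
  case (of_int z)
  then have "z = 0 \<or> z = 1 \<or> z = 2 \<or> z = 3 \<or> z = 4" by fastforce
  then show ?case by auto
qed

lemma UNIV_5: "(UNIV :: 5 set) = {0, 1, 2, 3, 4}"
  using exhaust_5 by auto

lemma sum_UNIV_5: "sum f (UNIV :: 5 set) = f 0 + f 1 + f 2 + f 3 + f 4"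
  unfolding UNIV_5 by (simp add: add.assoc)

lemma idx_of_nat: "k < 5 \<Longrightarrow> idx (of_nat k) = k"
  unfolding idx_def by (rule the_equality) (auto simp: less_Suc_eq numeral_eq_Suc)

lemma idx_simps: "idx 0 = 0" "idx 1 = 1" "idx 2 = 2" "idx 3 = 3" "idx 4 = 4"
  using idx_of_nat[of 0] idx_of_nat[of 1] idx_of_nat[of 2] idx_of_nat[of 3] idx_of_nat[of 4]
  by simp_all

definition vec5 :: "'a \<Rightarrow> 'a \<Rightarrow> 'a \<Rightarrow> 'a \<Rightarrow> 'a \<Rightarrow> 'a ^ 5" where
  "vec5 x1 x2 x3 x4 x5 = (\<chi> i. if i = 0 then x1 else if i = 1 then x2 else if i = 2 then x3
      else if i = 3 then x4 else x5)"

lemma vec5_nth [simp]: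
  "vec5 x1 x2 x3 x4 x5 $ 0 = x1" "vec5 x1 x2 x3 x4 x5 $ 1 = x2" "vec5 x1 x2 x3 x4 x5 $ 2 = x3"
  "vec5 x1 x2 x3 x4 x5 $ 3 = x4" "vec5 x1 x2 x3 x4 x5 $ 4 = x5"
  by (simp_all add: vec5_def)

lemma vec_eq_iff_5:
  fixes v w :: "'a ^ 5"
  shows "v = w \<longleftrightarrow> v$0 = w$0 \<and> v$1 = w$1 \<and> v$2 = w$2 \<and> v$3 = w$3 \<and> v$4 = w$4"
proof
  assume "v$0 = w$0 \<and> v$1 = w$1 \<and> v$2 = w$2 \<and> v$3 = w$3 \<and> v$4 = w$4"
  then have "v$i = w$i" for i :: 5
    using exhaust_5[of i] by auto
  then show "v = w"
    by (simp add: vec_eq_iff)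
qed simp

lemma vec5_eq_iff [simp]:
  "vec5 x1 x2 x3 x4 x5 = vec5 y1 y2 y3 y4 y5 \<longleftrightarrow>
     x1 = y1 \<and> x2 = y2 \<and> x3 = y3 \<and> x4 = y4 \<and> x5 = y5"
  by (simp add: vec_eq_iff_5)

lemma vec5_eq_0_iff [simp]:
  "vec5 x1 x2 x3 x4 x5 = (0 :: 'a::zero ^ 5) \<longleftrightarrow> x1 = 0 \<and> x2 = 0 \<and> x3 = 0 \<and> x4 = 0 \<and> x5 = 0"
  by (simp add: vec_eq_iff_5)

lemma vec5_add [simp]:
  "vec5 x1 x2 x3 x4 x5 + vec5 y1 y2 y3 y4 y5 =
     vec5 (x1 + y1) (x2 + y2) (x3 + y3) (x4 + y4) (x5 + y5)"
  by (simp add: vec_eq_iff_5)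

lemma vec5_scale [simp]:
  "(k :: 'a::times) *s vec5 x1 x2 x3 x4 x5 = vec5 (k * x1) (k * x2) (k * x3) (k * x4) (k * x5)"
  by (simp add: vec_eq_iff_5)

lemma X_eq_nth [simp]:
  fixes v :: "'a ^ 5"
  shows "X 1 v = v$0" "X 2 v = v$1" "X 3 v = v$2" "X 4 v = v$3" "X 5 v = v$4"
  by (simp_all add: X_def coord_def)

lemma piP_eq: "piP = {v. v$3 = 0 \<and> v$4 = 0}"
  by (simp add: piP_def)

lemma ellL_eq: "ellL = {v. v$2 = 0 \<and> v$3 = 0 \<and> v$4 = 0}"
  by (simp add: ellL_def)

lemma ellL_subset_piP: "ellL \<subseteq> piP"
  unfolding ellL_eq piP_eq by auto

section \<open>The group G\<close>

definition G_map :: "'a::field \<Rightarrow> 'a \<Rightarrow> 'a \<Rightarrow> 'a \<Rightarrow> 'a \<Rightarrow> 'a \<Rightarrow> 'a ^ 5 \<Rightarrow> 'a ^ 5" where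
  "G_map a b c r s t v = vec5 (v$0 + r * v$2 + (r^2 - a * r + s) * v$3 + t * v$4)
      (v$1 + s * v$2 + (2 * r * s - t) * v$3 + (s^2 + b * s - c * r) * v$4)
      (v$2 + 2 * r * v$3 + 2 * s * v$4) (v$3) (v$4)"

lemma Mrst_mult_vec: "Mrst a b c r s t *v v = G_map a b c r s t v"
  unfolding G_map_def vec_eq_iff_5
  by (simp add: matrix_vector_mult_def sum_UNIV_5 Mrst_def idx_simps algebra_simps)

lemma G_orbit_eq: "G_orbit a b c L = {G_map a b c r s t ` L | r s t. True}"
  by (simp add: G_orbit_def act_def Mrst_mult_vec)

lemma G_map_lincomb:
  "G_map a b c r s t (\<alpha> *s u + \<beta> *s v) = \<alpha> *s G_map a b c r s t u + \<beta> *s G_map a b c r s t v"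
  unfolding G_map_def vec_eq_iff_5 by (simp add: algebra_simps)

lemma G_map_G_map:
  "G_map a b c r s t (G_map a b c r' s' t' v) =
     G_map a b c (r + r') (s + s') (t + t' + 2 * r * s') v"
  unfolding G_map_def vec_eq_iff_5 by (simp add: algebra_simps power2_eq_square)

lemma G_map_0: "G_map a b c 0 0 0 v = v"
  unfolding G_map_def vec_eq_iff_5 by simp

lemma G_map_eq_0_iff: "G_map a b c r s t v = 0 \<longleftrightarrow> v = 0"
  by (auto simp: G_map_def vec_eq_iff_5)

lemma G_orbit_self: "L \<in> G_orbit a b c L"
proof -
  have "L = G_map a b c 0 0 0 ` L" by (simp add: G_map_0)
  then show ?thesis unfolding G_orbit_eq by blast
qed

lemma G_orbit_image: "G_orbit a b c (G_map a b c r s t ` L) = G_orbit a b c L"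
proof -
  have "G_map a b c r' s' t' ` G_map a b c r s t ` L \<in> G_orbit a b c L" for r' s' t'
    unfolding G_orbit_eq image_image G_map_G_map by blast
  moreover have "G_map a b c r' s' t' ` L \<in> G_orbit a b c (G_map a b c r s t ` L)" for r' s' t'
  proof -
    have "G_map a b c r' s' t' ` L =
            G_map a b c (r' - r) (s' - s) (t' - t - 2 * (r' - r) * s) ` G_map a b c r s t ` L"
      unfolding image_image G_map_G_map by simp
    then show ?thesis unfolding G_orbit_eq by blast
  qed
  ultimately show ?thesis
    unfolding G_orbit_eq[of a b c L] G_orbit_eq[of a b c "G_map a b c r s t ` L"] by blast
qed

lemma G_orbit_eq_if_mem:
  assumes "L' \<in> G_orbit a b c L"
  shows "G_orbit a b c L' = G_orbit a b c L"
proof -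
  obtain r s t where "L' = G_map a b c r s t ` L"
    using assms unfolding G_orbit_eq by blast
  then show ?thesis by (simp add: G_orbit_image)
qed

lemma card_G_orbit_if_free:
  fixes a b c :: "'a::field"
  assumes "\<And>r s t r' s' t'.
    G_map a b c r s t ` L = G_map a b c r' s' t' ` L \<Longrightarrow> (r, s, t) = (r', s', t')"
  shows "card (G_orbit a b c L) = CARD('a)^3"
proof -
  have "G_orbit a b c L = range (\<lambda>(r, s, t). G_map a b c r s t ` L)"
    unfolding G_orbit_eq by auto
  moreover have "inj (\<lambda>(r, s, t). G_map a b c r s t ` L)"
    using assms by (intro injI) auto
  ultimately show ?thesis
    by (simp add: card_image card_cartesian_product power3_eq_cube flip: UNIV_Times_UNIV)
qed

definition span1 :: "'a::field ^ 5 \<Rightarrow> ('a ^ 5) set" where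
  "span1 p = {\<alpha> *s p | \<alpha>. True}"

definition span2 :: "'a::field ^ 5 \<Rightarrow> 'a ^ 5 \<Rightarrow> ('a ^ 5) set" where
  "span2 u v = {\<alpha> *s u + \<beta> *s v | \<alpha> \<beta>. True}"

definition indep2 :: "'a::field ^ 5 \<Rightarrow> 'a ^ 5 \<Rightarrow> bool" where
  "indep2 u v \<longleftrightarrow> (\<forall>\<alpha> \<beta>. \<alpha> *s u + \<beta> *s v = 0 \<longrightarrow> \<alpha> = 0 \<and> \<beta> = 0)"

lemma mem_span1: "x \<in> span1 p \<longleftrightarrow> (\<exists>\<alpha>. x = \<alpha> *s p)"
  by (auto simp: span1_def)

lemma mem_span2: "x \<in> span2 u v \<longleftrightarrow> (\<exists>\<alpha> \<beta>. x = \<alpha> *s u + \<beta> *s v)"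
  by (auto simp: span2_def)

lemma span1_mem [simp]: "p \<in> span1 p" "0 \<in> span1 p"
  unfolding mem_span1 by (metis vector_smult_lid, metis vector_smult_lzero)

lemma span2_mem [simp]: "u \<in> span2 u v" "v \<in> span2 u v" "0 \<in> span2 u v"
  unfolding mem_span2
  by (metis vector_smult_lid vector_smult_lzero add_0_right,
      metis vector_smult_lid vector_smult_lzero add_0_left,
      metis vector_smult_lzero add_0_left)

lemma span2_lincomb_mem:
  assumes "x \<in> span2 u v" "y \<in> span2 u v"
  shows "\<alpha> *s x + \<beta> *s y \<in> span2 u v"
proof -
  obtain a1 b1 a2 b2 where "x = a1 *s u + b1 *s v" "y = a2 *s u + b2 *s v"
    using assms unfolding mem_span2 by blast
  then have "\<alpha> *s x + \<beta> *s y = (\<alpha> * a1 + \<beta> * a2) *s u + (\<alpha> * b1 + \<beta> * b2) *s v"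
    unfolding vec_eq_iff by (simp add: algebra_simps)
  then show ?thesis unfolding mem_span2 by blast
qed

lemma span2_smult_mem: "x \<in> span2 u v \<Longrightarrow> k *s x \<in> span2 u v"
  using span2_lincomb_mem[of x u v 0 k 0] by simp

lemma span1_subset_span2: "span1 u \<subseteq> span2 u v"
  unfolding span1_def using span2_smult_mem[of u u v] by auto

lemma span2_add_multiple: "span2 u (w + k *s u) = span2 u w"
proof -
  have "\<alpha> *s u + \<beta> *s (w + k *s u) = (\<alpha> + \<beta> * k) *s u + \<beta> *s w" for \<alpha> \<beta>
    unfolding vec_eq_iff by (simp add: algebra_simps)
  moreover have "\<alpha> *s u + \<beta> *s w = (\<alpha> - \<beta> * k) *s u + \<beta> *s (w + k *s u)" for \<alpha> \<beta>
    unfolding vec_eq_iff by (simp add: algebra_simps)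
  ultimately show ?thesis unfolding span2_def by blast
qed

lemma span1_smult_eq:
  assumes "k \<noteq> 0"
  shows "span1 (k *s p) = span1 p"
proof -
  have "\<alpha> *s p = (\<alpha> / k) *s (k *s p)" for \<alpha>
    using assms by (simp add: vector_smult_assoc)
  then have "span1 p \<subseteq> span1 (k *s p)"
    unfolding span1_def by blast
  moreover have "span1 (k *s p) \<subseteq> span1 p"
    unfolding span1_def by (auto simp: vector_smult_assoc)
  ultimately show ?thesis by blast
qed

lemma vec_span_singleton_eq_span1: "vec.span {p} = span1 p"
  by (auto simp: vec.span_singleton span1_def)

lemma vec_span_pair_eq_span2: "vec.span {u, v} = span2 u v"
proof -
  have "x - k *s u = \<beta> *s v \<Longrightarrow> x = k *s u + \<beta> *s v" for x k \<beta>
    by (metis diff_add_cancel add.commute)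
  moreover have "\<alpha> *s u + \<beta> *s v - \<alpha> *s u = \<beta> *s v" for \<alpha> \<beta>
    by simp
  ultimately show ?thesis
    unfolding vec.span_insert[of u "{v}"] vec.span_singleton span2_def by blast
qed

lemma indep2_minor:
  assumes "x$i * y$j - x$j * y$i \<noteq> 0"
  shows "indep2 x y"
  unfolding indep2_def
proof (intro allI impI)
  fix \<alpha> \<beta> assume "\<alpha> *s x + \<beta> *s y = 0"
  then have hi: "\<alpha> * x$i + \<beta> * y$i = 0" and hj: "\<alpha> * x$j + \<beta> * y$j = 0"
    by (metis vector_add_component vector_smult_component zero_index)+
  have "\<alpha> * (x$i * y$j - x$j * y$i) = y$j * (\<alpha> * x$i + \<beta> * y$i) - y$i * (\<alpha> * x$j + \<beta> * y$j)"
    "\<beta> * (x$i * y$j - x$j * y$i) = x$i * (\<alpha> * x$j + \<beta> * y$j) - x$j * (\<alpha> * x$i + \<beta> * y$i)"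
    by (simp_all add: algebra_simps)
  then show "\<alpha> = 0 \<and> \<beta> = 0" using hi hj assms by simp
qed

lemma indep2_lincomb_nonzero: "indep2 u v \<Longrightarrow> (\<alpha>, \<beta>) \<noteq> (0, 0) \<Longrightarrow> \<alpha> *s u + \<beta> *s v \<noteq> 0"
  unfolding indep2_def by auto

lemma indep2_iff_independent: "indep2 u v \<longleftrightarrow> u \<noteq> v \<and> vec.independent {u, v}"
proof
  assume ind: "indep2 u v"
  have uv: "u \<noteq> v"
    using ind[unfolded indep2_def, rule_format, of 1 "-1"] by auto
  have "v \<noteq> 0"
    using ind[unfolded indep2_def, rule_format, of 0 1] by auto
  moreover have "u \<notin> vec.span {v}"
  proof
    assume "u \<in> vec.span {v}"
    then obtain k where "u = k *s v" by (auto simp: vec.span_singleton)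
    then show False
      using ind[unfolded indep2_def, rule_format, of 1 "-k"] by (simp add: vector_smult_lneg)
  qed
  ultimately show "u \<noteq> v \<and> vec.independent {u, v}"
    using uv vec.independent_insert[of u "{v}"] by auto
next
  assume "u \<noteq> v \<and> vec.independent {u, v}"
  then have v0: "v \<noteq> 0" and us: "u \<notin> vec.span {v}"
    using vec.independent_insert[of u "{v}"] by auto
  show "indep2 u v" unfolding indep2_def
  proof (intro allI impI)
    fix \<alpha> \<beta> assume h: "\<alpha> *s u + \<beta> *s v = 0"
    have "\<alpha> = 0"
    proof (rule ccontr)
      assume "\<alpha> \<noteq> 0"
      moreover have "\<alpha> * u$i + \<beta> * v$i = 0" for i
        using h by (metis vector_add_component vector_smult_component zero_index)
      ultimately have "u = (- \<beta> / \<alpha>) *s v"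
        by (auto simp: vec_eq_iff field_simps add_eq_0_iff)
      then have "u \<in> range (\<lambda>k. k *s v)" by blast
      then show False using us by (simp add: vec.span_singleton)
    qed
    with h v0 show "\<alpha> = 0 \<and> \<beta> = 0" by simp
  qed
qed

lemma pg_line_span2: "indep2 u v \<Longrightarrow> pg_line (span2 u v)"
  unfolding pg_sub_def vec_span_pair_eq_span2[symmetric] indep2_iff_independent
  by (simp add: vec.dim_eq_card_independent)

lemma pg_point_span1: "p \<noteq> 0 \<Longrightarrow> pg_point (span1 p)"
  unfolding pg_sub_def vec_span_singleton_eq_span1[symmetric]
  by (simp add: vec.dim_eq_card_independent)

lemma pg_line_eq_span2:
  assumes "pg_line L" "indep2 u v" "u \<in> L" "v \<in> L"
  shows "L = span2 u v"
proof -
  have sL: "vec.subspace L" and dL: "vec.dim L = 2"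
    using assms(1) by (auto simp: pg_sub_def)
  have sub: "span2 u v \<subseteq> L"
    unfolding vec_span_pair_eq_span2[symmetric]
    using vec.span_minimal[of "{u, v}" L] sL assms by auto
  have "vec.subspace (span2 u v)" "vec.dim (span2 u v) = 2"
    using pg_line_span2[OF assms(2)] by (auto simp: pg_sub_def)
  then show ?thesis using vec.subspace_dim_equal[OF _ sL sub] dL by simp
qed

lemma pg_line_iff: "pg_line L \<longleftrightarrow> (\<exists>u v. indep2 u v \<and> L = span2 u v)"
proof
  assume "pg_line L"
  then have sL: "vec.subspace L" and dL: "vec.dim L = 2" by (auto simp: pg_sub_def)
  obtain B where B: "B \<subseteq> L" "vec.independent B" "L \<subseteq> vec.span B" "card B = vec.dim L"
    using vec.basis_exists by blast
  then obtain u v where uv: "B = {u, v}" "u \<noteq> v" using dL card_2_iff by metis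
  have "L = span2 u v"
    using vec.span_minimal[OF B(1) sL] B(3) uv vec_span_pair_eq_span2 by blast
  moreover have "indep2 u v" using indep2_iff_independent uv B(2) by blast
  ultimately show "\<exists>u v. indep2 u v \<and> L = span2 u v" by blast
qed (use pg_line_span2 in blast)

lemma pg_point_iff: "pg_point P \<longleftrightarrow> (\<exists>p. p \<noteq> 0 \<and> P = span1 p)"
proof
  assume "pg_point P"
  then have sP: "vec.subspace P" and dP: "vec.dim P = 1" by (auto simp: pg_sub_def)
  obtain B where B: "B \<subseteq> P" "vec.independent B" "P \<subseteq> vec.span B" "card B = vec.dim P"
    using vec.basis_exists by blast
  then obtain p where p: "B = {p}" using dP card_1_singletonE by metis
  have "P = span1 p"
    using vec.span_minimal[OF B(1) sP] B(3) p vec_span_singleton_eq_span1 by blast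
  moreover have "p \<noteq> 0" using B(2) p by auto
  ultimately show "\<exists>p. p \<noteq> 0 \<and> P = span1 p" by blast
qed (use pg_point_span1 in blast)

lemma pg_line_not_point: "pg_line L \<Longrightarrow> \<not> pg_point L"
  by (simp add: pg_sub_def)

lemma pg_sub_lincomb_mem: "pg_sub k L \<Longrightarrow> x \<in> L \<Longrightarrow> y \<in> L \<Longrightarrow> \<alpha> *s x + \<beta> *s y \<in> L"
  unfolding pg_sub_def by (simp add: vec.subspace_add vec.subspace_scale)

lemma pg_sub_zero: "pg_sub k L \<Longrightarrow> 0 \<in> L"
  unfolding pg_sub_def by (simp add: vec.subspace_0)

lemma pg_sub_smult_mem: "pg_sub k L \<Longrightarrow> x \<in> L \<Longrightarrow> \<alpha> *s x \<in> L"
  unfolding pg_sub_def by (simp add: vec.subspace_scale)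

lemma pg_line_subset_eq:
  assumes "pg_line L" "pg_line M" "L \<subseteq> M"
  shows "L = M"
proof -
  obtain u v where uv: "indep2 u v" "L = span2 u v"
    using assms(1) unfolding pg_line_iff by blast
  moreover have "u \<in> M" "v \<in> M"
    using assms(3) uv(2) by auto
  ultimately have "M = span2 u v"
    using pg_line_eq_span2[OF assms(2)] by blast
  then show ?thesis using uv(2) by simp
qed

lemma G_map_image_span2:
  "G_map a b c r s t ` span2 u v = span2 (G_map a b c r s t u) (G_map a b c r s t v)"
proof -
  have "span2 u v = range (\<lambda>(\<alpha>, \<beta>). \<alpha> *s u + \<beta> *s v)" for u v :: "'a ^ 5"
    by (auto simp: span2_def)
  then show ?thesis
    by (simp add: image_image G_map_lincomb case_prod_beta')
qed

section \<open>Finite fields\<close>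

lemma CARD_ge_2: "CARD('a::{field,finite}) \<ge> 2"
proof -
  have "card {0, 1::'a} \<le> CARD('a)" by (rule card_mono) simp_all
  then show ?thesis by simp
qed

lemma of_nat_CARD_eq_0: "of_nat CARD('a::{field,finite}) = (0::'a)"
proof -
  have bij: "bij_betw (\<lambda>x::'a. x + 1) UNIV UNIV"
    by (rule bij_betwI[of _ _ _ "\<lambda>x. x - 1"]) auto
  have "(\<Sum>x\<in>UNIV. x + 1) = (\<Sum>x\<in>(UNIV::'a set). x)"
    using sum.reindex_bij_betw[OF bij, of "\<lambda>x. x"] by simp
  moreover have "(\<Sum>x\<in>UNIV. x + 1) = (\<Sum>x\<in>(UNIV::'a set). x) + of_nat CARD('a)"
    by (simp add: sum.distrib)
  ultimately show ?thesis by simp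
qed

lemma two_neq_zero_if_odd_CARD:
  assumes "odd CARD('a::{field,finite})"
  shows "(2::'a) \<noteq> 0"
proof
  assume two: "(2::'a) = 0"
  obtain m where "CARD('a) = 2 * m + 1" using assms oddE by blast
  then have "(of_nat CARD('a) :: 'a) = 2 * of_nat m + 1" by simp
  also have "\<dots> = 1" using two by simp
  finally show False using of_nat_CARD_eq_0[where 'a='a] by simp
qed

lemma power_CARD_minus_1:
  fixes x :: "'a::{field,finite}"
  assumes "x \<noteq> 0"
  shows "x ^ (CARD('a) - 1) = 1"
proof -
  let ?N = "UNIV - {0::'a}"
  have bij: "bij_betw (\<lambda>y. x * y) ?N ?N"
    by (rule bij_betwI[of _ _ _ "\<lambda>y. y / x"]) (use assms in auto)
  have "(\<Prod>y\<in>?N. x * y) = (\<Prod>y\<in>?N. y)"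
    using prod.reindex_bij_betw[OF bij, of "\<lambda>y. y"] by simp
  moreover have "(\<Prod>y\<in>?N. x * y) = x ^ card ?N * (\<Prod>y\<in>?N. y)"
    by (simp add: prod.distrib)
  moreover have "(\<Prod>y\<in>?N. y) \<noteq> 0" by simp
  moreover have "card ?N = CARD('a) - 1" by (simp add: card_Diff_subset)
  ultimately show ?thesis by simp
qed

lemma primitive_element_neq_0:
  assumes "primitive_element \<omega>"
  shows "\<omega> \<noteq> 0"
proof -
  have "\<omega> ^ 1 \<in> UNIV - {0}" using assms unfolding primitive_element_def by blast
  then show ?thesis by simp
qed

lemma primitive_element_powers:
  fixes \<omega> :: "'a::{field,finite}"
  assumes "primitive_element \<omega>"
  shows "(\<lambda>k. \<omega> ^ k) ` {..< CARD('a) - 1} = UNIV - {0}"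
proof
  show "(\<lambda>k. \<omega> ^ k) ` {..< CARD('a) - 1} \<subseteq> UNIV - {0}"
    using primitive_element_neq_0[OF assms] by auto
  show "UNIV - {0} \<subseteq> (\<lambda>k. \<omega> ^ k) ` {..< CARD('a) - 1}"
  proof
    fix x :: 'a assume "x \<in> UNIV - {0}"
    then obtain k where x: "x = \<omega> ^ k" using assms unfolding primitive_element_def by blast
    let ?m = "CARD('a) - 1"
    have "\<omega> ^ k = (\<omega> ^ ?m) ^ (k div ?m) * \<omega> ^ (k mod ?m)"
      by (simp flip: power_add power_mult)
    also have "\<dots> = \<omega> ^ (k mod ?m)"
      using power_CARD_minus_1[OF primitive_element_neq_0[OF assms]] by simp
    finally have "x = \<omega> ^ (k mod ?m)" using x by simp
    moreover have "k mod ?m < ?m" using CARD_ge_2[where 'a='a] by simp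
    ultimately show "x \<in> (\<lambda>k. \<omega> ^ k) ` {..< ?m}" by blast
  qed
qed

lemma inj_on_primitive_element_powers:
  fixes \<omega> :: "'a::{field,finite}"
  assumes "primitive_element \<omega>"
  shows "inj_on (\<lambda>k. \<omega> ^ k) {..< CARD('a) - 1}"
proof (rule eq_card_imp_inj_on)
  show "card ((\<lambda>k. \<omega> ^ k) ` {..< CARD('a) - 1}) = card {..< CARD('a) - 1}"
    unfolding primitive_element_powers[OF assms] by (simp add: card_Diff_subset)
qed simp

lemma cubic_form_eq_0_if_irreducible:
  fixes a b c :: "'a::field"
  assumes irr: "irreducible [:c, b, a, 1:]" and h: "x^3 + a * x^2 * y + b * x * y^2 + c * y^3 = 0"
  shows "x = 0 \<and> y = 0"
proof (cases "y = 0")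
  case False
  define \<mu> where "\<mu> = x / y"
  have "poly [:c, b, a, 1:] \<mu> = (x^3 + a * x^2 * y + b * x * y^2 + c * y^3) / y^3"
    unfolding \<mu>_def using False by (simp add: field_simps power2_eq_square power3_eq_cube)
  then have "poly [:c, b, a, 1:] \<mu> = 0" using h by simp
  then obtain g where g: "[:c, b, a, 1:] = [:- \<mu>, 1:] * g" using poly_eq_0_iff_dvd by (metis dvdE)
  then have g0: "g \<noteq> 0" by auto
  have "degree [:c, b, a, 1:] = 3" by simp
  then have "degree g = 2" using g degree_mult_eq[of "[:- \<mu>, 1:]" g] g0 by simp
  then have "\<not> is_unit g" using is_unit_iff_degree[OF g0] by simp
  moreover have "\<not> is_unit [:- \<mu>, 1:]" using is_unit_iff_degree[of "[:- \<mu>, 1:]"] by simp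
  ultimately show ?thesis using irreducibleD[OF irr g] by simp
qed (use h in simp)

locale anisotropic_cubic =
  fixes a b c :: "'a::field"
  assumes two_neq_zero: "(2::'a) \<noteq> 0"
    and cubic_form_eq_0: "x^3 + a * x^2 * y + b * x * y^2 + c * y^3 = 0 \<Longrightarrow> x = 0 \<and> y = 0"

lemma anisotropic_cubicI:
  fixes a b c :: "'a::{field,finite}"
  assumes "odd CARD('a)" "irreducible [:c, b, a, 1:]"
  shows "anisotropic_cubic a b c"
  using assms by unfold_locales (auto dest: cubic_form_eq_0_if_irreducible two_neq_zero_if_odd_CARD)

definition solid :: "'a::field \<Rightarrow> 'a \<Rightarrow> ('a ^ 5) set" where
  "solid e4 e5 = {v. e5 * v$3 = e4 * v$4}"

lemma piP_subset_solid: "piP \<subseteq> solid e4 e5"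
  unfolding piP_eq solid_def by auto

lemma span2_subset_solid: "u \<in> solid e4 e5 \<Longrightarrow> v \<in> solid e4 e5 \<Longrightarrow> span2 u v \<subseteq> solid e4 e5"
  unfolding solid_def span2_def by (auto simp: algebra_simps)

lemma solid_outside_piP:
  fixes e4 e5 :: "'a::field"
  assumes "(e4, e5) \<noteq> (0, 0)" "z \<in> solid e4 e5" "z \<notin> piP"
  obtains \<kappa> where "\<kappa> \<noteq> 0" "z$3 = \<kappa> * e4" "z$4 = \<kappa> * e5"
proof (cases "e4 = 0")
  case True
  with assms have "e5 \<noteq> 0" "z$3 = 0" "z$4 \<noteq> 0"
    unfolding solid_def piP_eq by auto
  then show ?thesis using True by (intro that[of "z$4 / e5"]) simp_all
next
  case False
  with assms have "z$4 = (z$3 / e4) * e5" "z$3 \<noteq> 0"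
    unfolding solid_def piP_eq by (auto simp: field_simps)
  then show ?thesis using False by (intro that[of "z$3 / e4"]) simp_all
qed

lemma Solid_eq_solid:
  assumes "i \<in> {1..CARD('a) + 1}"
  obtains e4 e5 :: "'a::{field,finite}" where "(e4, e5) \<noteq> (0, 0)" "Solid \<omega> i = solid e4 e5"
proof -
  have q2: "CARD('a) \<ge> 2" by (rule CARD_ge_2)
  consider "1 \<le> i \<and> i \<le> CARD('a) - 1" | "i = CARD('a)" | "i = CARD('a) + 1"
    using assms by fastforce
  then show ?thesis
  proof cases
    case 1
    then have "Solid \<omega> i = solid (\<omega> ^ (i - 1)) 1" by (simp add: Solid_def solid_def)
    then show ?thesis by (rule that[rotated]) simp
  next
    case 2
    moreover have "\<not> CARD('a) \<le> CARD('a) - 1" using q2 by simp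
    ultimately have "Solid \<omega> i = solid 0 1" by (simp add: Solid_def solid_def)
    then show ?thesis by (rule that[rotated]) simp
  next
    case 3
    moreover have "\<not> CARD('a) + 1 \<le> CARD('a) - 1" by simp
    ultimately have "Solid \<omega> i = solid 1 0" by (simp add: Solid_def solid_def)
    then show ?thesis by (rule that[rotated]) simp
  qed
qed

lemma Solid_inter_subset_piP:
  fixes \<omega> :: "'a::{field,finite}"
  assumes prim: "primitive_element \<omega>"
    and "i \<in> {1..CARD('a) + 1}" "j \<in> {1..CARD('a) + 1}" "i \<noteq> j"
  shows "Solid \<omega> i \<inter> Solid \<omega> j \<subseteq> piP"
proof -
  have "Solid \<omega> i \<inter> Solid \<omega> j \<subseteq> piP"
    if i: "i \<in> {1..CARD('a) + 1}" and j: "j \<in> {1..CARD('a) + 1}" and "i < j" for i j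
  proof
    fix v assume v: "v \<in> Solid \<omega> i \<inter> Solid \<omega> j"
    have q2: "CARD('a) \<ge> 2" by (rule CARD_ge_2)
    have "v$3 = 0 \<and> v$4 = 0"
    proof (cases "j \<le> CARD('a) - 1")
      case True
      have "i - 1 \<in> {..< CARD('a) - 1}" "j - 1 \<in> {..< CARD('a) - 1}" "i - 1 \<noteq> j - 1"
        using True i j \<open>i < j\<close> by auto
      then have "\<omega> ^ (i - 1) \<noteq> \<omega> ^ (j - 1)"
        using inj_on_primitive_element_powers[OF prim] unfolding inj_on_def by blast
      moreover have "v$3 = \<omega> ^ (i - 1) * v$4" "v$3 = \<omega> ^ (j - 1) * v$4"
        using v i j True \<open>i < j\<close> by (auto simp: Solid_def)
      ultimately show ?thesis by auto
    next
      case False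
      then have "j = CARD('a) \<or> j = CARD('a) + 1" using j by auto
      then show ?thesis
        using v i j \<open>i < j\<close> q2 primitive_element_neq_0[OF prim]
        by (auto simp: Solid_def split: if_splits)
    qed
    then show "v \<in> piP" by (simp add: piP_eq)
  qed
  then show ?thesis using assms(2-) by (metis Int_commute linorder_neqE_nat)
qed

lemma Solid_cover:
  fixes \<omega> :: "'a::{field,finite}"
  assumes prim: "primitive_element \<omega>" and "z \<notin> piP"
  obtains i where "i \<in> {1..CARD('a) + 1}" "z \<in> Solid \<omega> i"
proof -
  have q2: "CARD('a) \<ge> 2" by (rule CARD_ge_2)
  consider "z$4 = 0" | "z$4 \<noteq> 0" "z$3 = 0" | "z$4 \<noteq> 0" "z$3 \<noteq> 0" by blast
  then show ?thesis
  proof cases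
    case 1
    then show ?thesis using q2 by (intro that[of "CARD('a) + 1"]) (auto simp: Solid_def)
  next
    case 2
    then show ?thesis using q2 by (intro that[of "CARD('a)"]) (auto simp: Solid_def)
  next
    case 3
    then have "z$3 / z$4 \<in> UNIV - {0}" by simp
    then obtain k where k: "k < CARD('a) - 1" "z$3 / z$4 = \<omega> ^ k"
      unfolding primitive_element_powers[OF prim, symmetric] by blast
    then show ?thesis using 3 by (intro that[of "k + 1"]) (auto simp: Solid_def field_simps)
  qed
qed

definition ell_points :: "('a::field ^ 5) set set" where
  "ell_points = {P. pg_point P \<and> P \<subseteq> ellL}"

lemma pg_line_ellL: "pg_line (ellL :: ('a::field ^ 5) set)"
proof -
  have "ellL = span2 (vec5 1 0 0 0 0) (vec5 0 1 0 0 (0::'a))"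
    unfolding ellL_eq span2_def by (auto simp: vec_eq_iff_5)
  moreover have "indep2 (vec5 1 0 0 0 0) (vec5 0 1 0 0 (0::'a))"
    by (rule indep2_minor[of _ 0 _ 1]) simp
  ultimately show ?thesis using pg_line_span2 by metis
qed

lemma ell_points_eq: "ell_points = {span1 (vec5 p1 p2 0 0 0) | p1 p2. (p1, p2) \<noteq> (0, 0)}"
proof -
  have "pg_point P \<and> P \<subseteq> ellL \<longleftrightarrow> (\<exists>p1 p2. P = span1 (vec5 p1 p2 0 0 0) \<and> (p1, p2) \<noteq> (0, 0))"
    for P :: "('a ^ 5) set"
  proof
    assume P: "pg_point P \<and> P \<subseteq> ellL"
    then obtain p where p: "p \<noteq> 0" "P = span1 p"
      unfolding pg_point_iff by auto
    with P have "p \<in> ellL" by auto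
    then have "p = vec5 (p$0) (p$1) 0 0 0" "(p$0, p$1) \<noteq> (0, 0)"
      using p(1) unfolding ellL_eq vec_eq_iff_5 by auto
    then show "\<exists>p1 p2. P = span1 (vec5 p1 p2 0 0 0) \<and> (p1, p2) \<noteq> (0, 0)"
      using p(2) by metis
  next
    assume "\<exists>p1 p2. P = span1 (vec5 p1 p2 0 0 0) \<and> (p1, p2) \<noteq> (0, 0)"
    then obtain p1 p2 where p: "(p1, p2) \<noteq> (0, 0)" "P = span1 (vec5 p1 p2 0 0 0)" by blast
    then have "pg_point P"
      using pg_point_span1[of "vec5 p1 p2 0 0 0"] by auto
    moreover have "P \<subseteq> ellL"
    proof
      fix x assume "x \<in> P"
      then obtain \<alpha> where "x = \<alpha> *s vec5 p1 p2 0 0 0"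
        using p(2) mem_span1 by blast
      then show "x \<in> ellL" by (simp add: ellL_eq)
    qed
    ultimately show "pg_point P \<and> P \<subseteq> ellL" by blast
  qed
  then show ?thesis unfolding ell_points_def by (intro Collect_cong) simp
qed

lemma ell_pointE:
  assumes "P \<in> ell_points"
  obtains p1 p2 where "(p1, p2) \<noteq> (0, 0)" "P = span1 (vec5 p1 p2 0 0 0)"
  using assms unfolding ell_points_eq by blast

definition ell_point :: "'a::field option \<Rightarrow> ('a ^ 5) set" where
  "ell_point x = (case x of None \<Rightarrow> span1 (vec5 0 1 0 0 0) | Some l \<Rightarrow> span1 (vec5 1 l 0 0 0))"

lemma range_ell_point: "range ell_point = ell_points"
proof
  show "range ell_point \<subseteq> ell_points"
  proof
    fix P assume "P \<in> range ell_point"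
    then obtain x where "P = ell_point x" by blast
    then show "P \<in> ell_points"
      unfolding ell_points_eq ell_point_def by (cases x) force+
  qed
  show "ell_points \<subseteq> range ell_point"
  proof
    fix P assume "P \<in> ell_points"
    then obtain p1 p2 where p: "(p1, p2) \<noteq> (0, 0)" "P = span1 (vec5 p1 p2 0 0 0)"
      by (rule ell_pointE)
    show "P \<in> range ell_point"
    proof (cases "p1 = 0")
      case True
      then have "P = ell_point None"
        using p span1_smult_eq[of p2 "vec5 0 1 0 0 0"] by (simp add: ell_point_def)
      then show ?thesis by blast
    next
      case False
      then have "P = ell_point (Some (p2 / p1))"
        using p span1_smult_eq[of p1 "vec5 1 (p2 / p1) 0 0 0"] by (simp add: ell_point_def)
      then show ?thesis by blast
    qed
  qed
qed

lemma inj_ell_point: "inj ell_point"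
proof (rule injI)
  fix x y :: "'a option" assume xy: "ell_point x = ell_point y"
  have multiple: "\<exists>\<alpha>. u = \<alpha> *s v" if "span1 u = span1 v" for u v :: "'a ^ 5"
    using span1_mem(1)[of u] unfolding that mem_span1 .
  show "x = y"
  proof (cases x; cases y)
    fix l l' assume "x = Some l" "y = Some l'"
    then show "x = y" using multiple[of "vec5 1 l 0 0 0" "vec5 1 l' 0 0 0"] xy
      by (auto simp: ell_point_def)
  qed (use multiple xy in \<open>auto simp: ell_point_def dest!: multiple\<close>)
qed

lemma card_ell_points: "card (ell_points :: ('a::{field,finite} ^ 5) set set) = CARD('a) + 1"
  unfolding range_ell_point[symmetric] by (simp add: card_image inj_ell_point)

lemma pg_line_eq_ellL_if_two_ell_points:
  assumes "P \<in> ell_points" "P' \<in> ell_points" "P \<noteq> P'" "pg_line L" "P \<subseteq> L" "P' \<subseteq> L"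
  shows "L = ellL"
proof -
  obtain p1 p2 p1' p2' where p: "(p1, p2) \<noteq> (0, 0)" "P = span1 (vec5 p1 p2 0 0 0)"
    and p': "(p1', p2') \<noteq> (0, 0)" "P' = span1 (vec5 p1' p2' 0 0 0)"
    using assms(1,2) by (metis ell_pointE)
  have "p1 * p2' - p2 * p1' \<noteq> 0"
  proof
    assume det: "p1 * p2' - p2 * p1' = 0"
    have "P = P'"
    proof (cases "p1' = 0")
      case True
      then have "vec5 p1 p2 0 0 0 = (p2 / p2') *s vec5 p1' p2' 0 0 0" "p2 / p2' \<noteq> 0"
        using p p' det by auto
      then show ?thesis using p(2) p'(2) span1_smult_eq by metis
    next
      case False
      then have "vec5 p1 p2 0 0 0 = (p1 / p1') *s vec5 p1' p2' 0 0 0" "p1 / p1' \<noteq> 0"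
        using p det by (auto simp: field_simps)
      then show ?thesis using p(2) p'(2) span1_smult_eq by metis
    qed
    then show False using assms(3) by simp
  qed
  then have ind: "indep2 (vec5 p1 p2 0 0 0) (vec5 p1' p2' 0 0 0)"
    by (intro indep2_minor[of _ 0 _ 1]) simp
  have "vec5 p1 p2 0 0 0 \<in> L" "vec5 p1' p2' 0 0 0 \<in> L"
    using assms(5,6) p(2) p'(2) by auto
  moreover have "vec5 p1 p2 0 0 0 \<in> ellL" "vec5 p1' p2' 0 0 0 \<in> ellL"
    by (simp_all add: ellL_eq)
  ultimately show ?thesis
    using pg_line_eq_span2[OF assms(4) ind] pg_line_eq_span2[OF pg_line_ellL ind] by simp
qed

section \<open>The four classes of lines\<close>

definition plane_pencil :: "('a::field ^ 5) set \<Rightarrow> ('a ^ 5) set set" where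
  "plane_pencil P = {L \<in> pg_lines. L \<subseteq> piP \<and> P \<subseteq> L \<and> L \<noteq> ellL}"

definition solid_pencil :: "('a::field ^ 5) set \<Rightarrow> ('a ^ 5) set \<Rightarrow> ('a ^ 5) set set" where
  "solid_pencil S P = {L \<in> pg_lines. L \<subseteq> S \<and> P \<subseteq> L \<and> \<not> L \<subseteq> piP}"

definition ell_skew_lines :: "('a::field ^ 5) set \<Rightarrow> ('a ^ 5) set set" where
  "ell_skew_lines S = {L \<in> pg_lines. L \<subseteq> S \<and> L \<inter> ellL = {0} \<and> pg_point (L \<inter> piP)}"

definition pi_skew_lines :: "('a::field ^ 5) set set" where
  "pi_skew_lines = {L \<in> pg_lines. L \<inter> piP = {0}}"

lemma span1_subset: "pg_sub k L \<Longrightarrow> x \<in> L \<Longrightarrow> span1 x \<subseteq> L"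
  unfolding pg_sub_def vec_span_singleton_eq_span1[symmetric] by (simp add: vec.span_minimal)

lemma pg_line_in_piP_meets_ellL:
  assumes "pg_line L" "L \<subseteq> piP"
  obtains p where "p \<in> L" "p \<noteq> 0" "p \<in> ellL"
proof -
  obtain u v where uv: "indep2 u v" "L = span2 u v"
    using assms(1) unfolding pg_line_iff by blast
  obtain p where p: "p \<in> L" "p \<noteq> 0" "p$2 = 0"
  proof (cases "u$2 = 0 \<and> v$2 = 0")
    case True
    then show ?thesis using that[of u] uv indep2_lincomb_nonzero[OF uv(1), of 1 0] by simp
  next
    case False
    let ?p = "(- v$2) *s u + u$2 *s v"
    have "?p \<in> L" unfolding uv(2) mem_span2 by blast
    moreover have "?p \<noteq> 0"
      by (rule indep2_lincomb_nonzero[OF uv(1)]) (use False in auto)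
    moreover have "?p$2 = 0" by (simp add: algebra_simps)
    ultimately show ?thesis using that by blast
  qed
  then show ?thesis using assms(2) that by (auto simp: piP_eq ellL_eq)
qed

lemma indep2_if_piP_notin_piP:
  assumes "w \<in> piP" "w \<noteq> 0" "z \<notin> piP"
  shows "indep2 w z"
  unfolding indep2_def
proof (intro allI impI)
  fix \<alpha> \<beta> assume h: "\<alpha> *s w + \<beta> *s z = 0"
  then have "(\<alpha> *s w + \<beta> *s z)$3 = 0" "(\<alpha> *s w + \<beta> *s z)$4 = 0" by simp_all
  then have "\<beta> * z$3 = 0" "\<beta> * z$4 = 0"
    using assms(1) unfolding piP_eq by simp_all
  then have "\<beta> = 0" using assms(3) unfolding piP_eq by auto
  with h assms(2) show "\<alpha> = 0 \<and> \<beta> = 0" by simp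
qed

lemma span2_inter_piP:
  assumes "w \<in> piP" "z \<notin> piP"
  shows "span2 w z \<inter> piP = span1 w"
proof
  show "span2 w z \<inter> piP \<subseteq> span1 w"
  proof
    fix x assume x: "x \<in> span2 w z \<inter> piP"
    then obtain \<alpha> \<beta> where "x = \<alpha> *s w + \<beta> *s z"
      unfolding Int_iff mem_span2 by blast
    with x have x: "x = \<alpha> *s w + \<beta> *s z" "x \<in> piP" by auto
    then have "\<beta> * z$3 = 0" "\<beta> * z$4 = 0"
      using assms(1) unfolding piP_eq by auto
    then have "\<beta> = 0" using assms(2) unfolding piP_eq by auto
    then show "x \<in> span1 w" using x(1) unfolding mem_span1 by simp
  qed
  show "span1 w \<subseteq> span2 w z \<inter> piP"
    using span1_subset_span2[of w z] assms(1) by (auto simp: mem_span1 piP_eq)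
qed

lemma pg_line_meeting_piP_in_Solid:
  fixes \<omega> :: "'a::{field,finite}"
  assumes prim: "primitive_element \<omega>" and line: "pg_line L"
    and w: "w \<in> L" "w \<in> piP" "w \<noteq> 0" and z: "z \<in> L" "z \<notin> piP"
  obtains i where "i \<in> {1..CARD('a) + 1}" "L \<subseteq> Solid \<omega> i" "L \<inter> piP = span1 w"
proof -
  have Lwz: "L = span2 w z"
    using pg_line_eq_span2[OF line indep2_if_piP_notin_piP[OF w(2,3) z(2)] w(1) z(1)] .
  obtain i where i: "i \<in> {1..CARD('a) + 1}" "z \<in> Solid \<omega> i"
    using Solid_cover[OF prim z(2)] by blast
  obtain e4 e5 where "Solid \<omega> i = solid e4 e5"
    using Solid_eq_solid[OF i(1)] by blast
  then have "L \<subseteq> Solid \<omega> i"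
    using Lwz i(2) w(2) piP_subset_solid span2_subset_solid by blast
  moreover have "L \<inter> piP = span1 w"
    using Lwz span2_inter_piP w(2) z(2) by blast
  ultimately show ?thesis using i(1) that by blast
qed

lemma line_classification:
  fixes \<omega> :: "'a::{field,finite}"
  assumes prim: "primitive_element \<omega>" and L: "L \<in> pg_lines" "L \<noteq> ellL"
  shows "(\<exists>P\<in>ell_points. L \<in> plane_pencil P)
    \<or> (\<exists>i\<in>{1..CARD('a) + 1}. \<exists>P\<in>ell_points. L \<in> solid_pencil (Solid \<omega> i) P)
    \<or> (\<exists>i\<in>{1..CARD('a) + 1}. L \<in> ell_skew_lines (Solid \<omega> i))
    \<or> L \<in> pi_skew_lines"
proof -
  have line: "pg_line L" using L(1) by (simp add: pg_lines_def)
  have "0 \<in> L" using line by (rule pg_sub_zero)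
  then have "L \<inter> piP = {0} \<or> L \<subseteq> piP \<or> (\<exists>w z. w \<in> L \<inter> piP \<and> w \<noteq> 0 \<and> z \<in> L \<and> z \<notin> piP)"
    by (auto simp: piP_eq)
  then consider "L \<inter> piP = {0}" | "L \<subseteq> piP"
    | w z where "w \<in> L \<inter> piP" "w \<noteq> 0" "z \<in> L" "z \<notin> piP"
    by blast
  then show ?thesis
  proof cases
    case 1
    then show ?thesis using L(1) by (simp add: pi_skew_lines_def)
  next
    case 2
    then obtain p where "p \<in> L" "p \<noteq> 0" "p \<in> ellL"
      using pg_line_in_piP_meets_ellL[OF line] by blast
    then have "span1 p \<in> ell_points" "span1 p \<subseteq> L"
      using pg_point_span1[of p] span1_subset[OF line, of p] span1_subset[OF pg_line_ellL, of p]
      by (simp_all add: ell_points_def)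
    then show ?thesis using 2 L by (auto simp: plane_pencil_def)
  next
    case 3
    then obtain i where i: "i \<in> {1..CARD('a) + 1}" "L \<subseteq> Solid \<omega> i" "L \<inter> piP = span1 w"
      using pg_line_meeting_piP_in_Solid[OF prim line] by blast
    show ?thesis
    proof (cases "w \<in> ellL")
      case True
      then have "span1 w \<in> ell_points"
        using pg_point_span1 3 span1_subset[OF pg_line_ellL] by (auto simp: ell_points_def)
      moreover have "L \<in> solid_pencil (Solid \<omega> i) (span1 w)"
        using L(1) i 3 by (auto simp: solid_pencil_def)
      ultimately show ?thesis using i(1) by blast
    next
      case False
      then have "span1 w \<inter> ellL = {0}"
        by (auto simp: mem_span1 ellL_eq)
      then have "L \<inter> ellL = {0}"
        using i(3) ellL_subset_piP \<open>0 \<in> L\<close> by (auto simp: ellL_eq)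
      then have "L \<in> ell_skew_lines (Solid \<omega> i)"
        using L(1) i pg_point_span1 3 by (auto simp: ell_skew_lines_def)
      then show ?thesis using i(1) by blast
    qed
  qed
qed

lemma indep2_if_nth:
  assumes "u$j = 0" "w$j \<noteq> 0" "u \<noteq> 0"
  shows "indep2 u w"
  unfolding indep2_def
proof (intro allI impI)
  fix \<alpha> \<beta> assume h: "\<alpha> *s u + \<beta> *s w = 0"
  then have "(\<alpha> *s u + \<beta> *s w)$j = 0" by simp
  then have "\<beta> = 0" using assms(1,2) by simp
  with h assms(3) show "\<alpha> = 0 \<and> \<beta> = 0" by simp
qed

text \<open>Modulo the point \<open>(p1, p2, 0, 0, 0)\<close>, the first two coordinates of \<open>w\<close> are determined
  by this single number.\<close>

definition ell_cross :: "'a::field \<Rightarrow> 'a \<Rightarrow> 'a ^ 5 \<Rightarrow> 'a" where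
  "ell_cross p1 p2 w = p1 * w$1 - p2 * w$0"

definition ell_lift :: "'a::field \<Rightarrow> 'a \<Rightarrow> 'a \<Rightarrow> 'a \<Rightarrow> 'a \<Rightarrow> 'a \<Rightarrow> 'a ^ 5" where
  "ell_lift p1 p2 k x3 x4 x5 =
     vec5 (if p1 = 0 then - k / p2 else 0) (if p1 = 0 then 0 else k / p1) x3 x4 x5"

lemma ell_lift_nth [simp]:
  "ell_lift p1 p2 k x3 x4 x5 $ 2 = x3" "ell_lift p1 p2 k x3 x4 x5 $ 3 = x4"
  "ell_lift p1 p2 k x3 x4 x5 $ 4 = x5"
  by (simp_all add: ell_lift_def)

lemma ell_cross_ell_lift: "(p1, p2) \<noteq> (0, 0) \<Longrightarrow> ell_cross p1 p2 (ell_lift p1 p2 k x3 x4 x5) = k"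
  unfolding ell_cross_def ell_lift_def by auto

lemma span2_ell_point_eq_iff:
  fixes p1 p2 :: "'a::field"
  assumes p: "(p1, p2) \<noteq> (0, 0)" and j: "j \<in> {2, 3, 4}" and w: "w$j = w'$j" "w$j \<noteq> 0"
  shows "span2 (vec5 p1 p2 0 0 0) w = span2 (vec5 p1 p2 0 0 0) w' \<longleftrightarrow>
    w$2 = w'$2 \<and> w$3 = w'$3 \<and> w$4 = w'$4 \<and> ell_cross p1 p2 w = ell_cross p1 p2 w'"
proof
  assume "span2 (vec5 p1 p2 0 0 0) w = span2 (vec5 p1 p2 0 0 0) w'"
  then have "w' \<in> span2 (vec5 p1 p2 0 0 0) w" by simp
  then obtain \<alpha> \<beta> where w': "w' = \<alpha> *s vec5 p1 p2 0 0 0 + \<beta> *s w"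
    unfolding mem_span2 by blast
  have "(vec5 (\<alpha> * p1) (\<alpha> * p2) 0 0 0 :: 'a ^ 5)$j = 0" using j by auto
  then have "w'$j = \<beta> * w$j" using w' by simp
  then have "\<beta> = 1" using w by simp
  then show "w$2 = w'$2 \<and> w$3 = w'$3 \<and> w$4 = w'$4 \<and> ell_cross p1 p2 w = ell_cross p1 p2 w'"
    using w' unfolding ell_cross_def by (simp add: algebra_simps)
next
  assume e: "w$2 = w'$2 \<and> w$3 = w'$3 \<and> w$4 = w'$4 \<and> ell_cross p1 p2 w = ell_cross p1 p2 w'"
  define d0 where "d0 = w'$0 - w$0"
  define d1 where "d1 = w'$1 - w$1"
  have pd: "p1 * d1 = p2 * d0"
    using e unfolding ell_cross_def d0_def d1_def by (simp add: algebra_simps)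
  obtain \<kappa> where k: "d0 = \<kappa> * p1" "d1 = \<kappa> * p2"
  proof (cases "p1 = 0")
    case True
    then show ?thesis using p pd by (intro that[of "d1 / p2"]) simp_all
  next
    case False
    then show ?thesis using pd by (intro that[of "d0 / p1"]) (simp_all add: field_simps)
  qed
  have "w' = w + \<kappa> *s vec5 p1 p2 0 0 0"
    using e k unfolding vec_eq_iff_5 d0_def d1_def by (simp add: algebra_simps)
  then show "span2 (vec5 p1 p2 0 0 0) w = span2 (vec5 p1 p2 0 0 0) w'"
    by (simp only: span2_add_multiple)
qed

lemma G_map_ell_point: "G_map a b c r s t (vec5 p1 p2 0 0 0) = vec5 p1 p2 0 0 0"
  by (simp add: G_map_def)

lemma G_orbit_span2_ell_point:
  "G_orbit a b c (span2 (vec5 p1 p2 0 0 0) w) =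
     {span2 (vec5 p1 p2 0 0 0) (G_map a b c r s t w) | r s t. True}"
  unfolding G_orbit_eq G_map_image_span2 G_map_ell_point by simp

section \<open>Lines of \<pi> through a point of \<ell>\<close>

lemma plane_pencil_eq:
  assumes p: "(p1, p2) \<noteq> (0, 0)"
  shows "plane_pencil (span1 (vec5 p1 p2 0 0 0)) =
    {span2 (vec5 p1 p2 0 0 0) w | w. w$2 = 1 \<and> w$3 = 0 \<and> w$4 = 0}"
    (is "_ = ?lines")
proof
  let ?p = "vec5 p1 p2 0 0 0 :: 'a ^ 5"
  have ind: "indep2 ?p w" if "w$2 = 1" for w
    by (rule indep2_if_nth[of _ 2]) (use p that in auto)
  show "plane_pencil (span1 ?p) \<subseteq> ?lines"
  proof
    fix L assume "L \<in> plane_pencil (span1 ?p)"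
    then have line: "pg_line L" and Lpi: "L \<subseteq> piP" and "span1 ?p \<subseteq> L" "L \<noteq> ellL"
      by (auto simp: plane_pencil_def pg_lines_def)
    then have "?p \<in> L" using span1_mem(1) by blast
    obtain z where "z \<in> L" "z \<notin> ellL"
      using pg_line_subset_eq[OF line pg_line_ellL] \<open>L \<noteq> ellL\<close> by blast
    then have z: "z \<in> L" "z$2 \<noteq> 0" "z$3 = 0" "z$4 = 0"
      using Lpi by (auto simp: piP_eq ellL_eq)
    let ?w = "(1 / z$2) *s z"
    have "?w \<in> L"
      using line z(1) by (rule pg_sub_smult_mem)
    moreover have w: "?w$2 = 1" "?w$3 = 0" "?w$4 = 0" using z by simp_all
    ultimately have "L = span2 ?p ?w"
      using pg_line_eq_span2[OF line ind] \<open>?p \<in> L\<close> by blast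
    then show "L \<in> ?lines" using w by blast
  qed
  show "?lines \<subseteq> plane_pencil (span1 ?p)"
  proof
    fix L assume "L \<in> ?lines"
    then obtain w where w: "w$2 = 1" "w$3 = 0" "w$4 = 0" and L: "L = span2 ?p w" by blast
    have "w \<notin> ellL" using w by (simp add: ellL_eq)
    then have "L \<noteq> ellL" using span2_mem(2)[of w ?p] L by blast
    moreover have "L \<subseteq> piP" unfolding L span2_def piP_eq using w by auto
    moreover have "pg_line L" using pg_line_span2[OF ind] w L by simp
    moreover have "span1 ?p \<subseteq> L" using span1_subset_span2 L by simp
    ultimately show "L \<in> plane_pencil (span1 ?p)"
      by (simp add: plane_pencil_def pg_lines_def)
  qed
qed

lemma plane_pencil_eq_range:
  assumes p: "(p1, p2) \<noteq> (0, 0)"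
  shows "plane_pencil (span1 (vec5 p1 p2 0 0 0)) =
    range (\<lambda>k. span2 (vec5 p1 p2 0 0 0) (ell_lift p1 p2 k 1 0 0))"
  unfolding plane_pencil_eq[OF p]
proof (intro equalityI subsetI)
  fix L assume "L \<in> {span2 (vec5 p1 p2 0 0 0) w | w. w$2 = 1 \<and> w$3 = 0 \<and> w$4 = 0}"
  then obtain w where w: "w$2 = 1" "w$3 = 0" "w$4 = 0" "L = span2 (vec5 p1 p2 0 0 0) w"
    by blast
  then have "L = span2 (vec5 p1 p2 0 0 0) (ell_lift p1 p2 (ell_cross p1 p2 w) 1 0 0)"
    using span2_ell_point_eq_iff[OF p, of 2] ell_cross_ell_lift[OF p] by simp
  then show "L \<in> range (\<lambda>k. span2 (vec5 p1 p2 0 0 0) (ell_lift p1 p2 k 1 0 0))" by blast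
next
  fix L assume "L \<in> range (\<lambda>k. span2 (vec5 p1 p2 0 0 0) (ell_lift p1 p2 k 1 0 0))"
  then obtain k where "L = span2 (vec5 p1 p2 0 0 0) (ell_lift p1 p2 k 1 0 0)" by blast
  moreover have "ell_lift p1 p2 k 1 0 0 $ 2 = 1 \<and> ell_lift p1 p2 k 1 0 0 $ 3 = 0 \<and>
      ell_lift p1 p2 k 1 0 0 $ 4 = 0"
    by simp
  ultimately show "L \<in> {span2 (vec5 p1 p2 0 0 0) w | w. w$2 = 1 \<and> w$3 = 0 \<and> w$4 = 0}"
    by blast
qed

lemma card_plane_pencil:
  assumes "(p1, p2) \<noteq> (0, 0)"
  shows "card (plane_pencil (span1 (vec5 p1 p2 0 0 (0::'a::field)))) = CARD('a)"
proof -
  have "inj (\<lambda>k. span2 (vec5 p1 p2 0 0 0) (ell_lift p1 p2 k 1 0 (0::'a)))"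
    using span2_ell_point_eq_iff[OF assms, of 2] ell_cross_ell_lift[OF assms] by (intro injI) simp
  then show ?thesis unfolding plane_pencil_eq_range[OF assms] by (simp add: card_image)
qed

lemma G_orbit_plane_pencil:
  assumes p: "(p1, p2) \<noteq> (0, 0)" and L: "L \<in> plane_pencil (span1 (vec5 p1 p2 0 0 0))"
  shows "G_orbit a b c L = plane_pencil (span1 (vec5 p1 p2 0 0 0))"
proof -
  let ?p = "vec5 p1 p2 0 0 0"
  obtain w where w: "w$2 = 1" "w$3 = 0" "w$4 = 0" and Lw: "L = span2 ?p w"
    using L unfolding plane_pencil_eq[OF p] by blast
  show ?thesis
    unfolding Lw G_orbit_span2_ell_point plane_pencil_eq[OF p]
  proof (intro equalityI subsetI)
    fix L' assume "L' \<in> {span2 ?p (G_map a b c r s t w) | r s t. True}"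
    then obtain r s t where "L' = span2 ?p (G_map a b c r s t w)" by blast
    moreover have "G_map a b c r s t w $ 2 = 1 \<and> G_map a b c r s t w $ 3 = 0 \<and>
        G_map a b c r s t w $ 4 = 0"
      using w by (simp add: G_map_def)
    ultimately show "L' \<in> {span2 ?p w' | w'. w'$2 = 1 \<and> w'$3 = 0 \<and> w'$4 = 0}" by blast
  next
    fix L' assume "L' \<in> {span2 ?p w' | w'. w'$2 = 1 \<and> w'$3 = 0 \<and> w'$4 = 0}"
    then obtain w' where w': "w'$2 = 1" "w'$3 = 0" "w'$4 = 0" "L' = span2 ?p w'" by blast
    moreover have "G_map a b c (w'$0 - w$0) (w'$1 - w$1) 0 w = w'"
      using w w' unfolding vec_eq_iff_5 by (simp add: G_map_def)
    ultimately have "L' = span2 ?p (G_map a b c (w'$0 - w$0) (w'$1 - w$1) 0 w)" by simp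
    then show "L' \<in> {span2 ?p (G_map a b c r s t w) | r s t. True}" by blast
  qed
qed

section \<open>Lines of the solids through a point of \<ell>\<close>

lemma solid_pencil_eq:
  assumes p: "(p1, p2) \<noteq> (0, 0)" and e: "(e4, e5) \<noteq> (0, 0)"
  shows "solid_pencil (solid e4 e5) (span1 (vec5 p1 p2 0 0 0)) =
    {span2 (vec5 p1 p2 0 0 0) w | w. w$3 = e4 \<and> w$4 = e5}"
proof (intro equalityI subsetI)
  let ?p = "vec5 p1 p2 0 0 0"
  have p_pi: "?p \<in> piP" "?p \<noteq> 0" using p by (auto simp: piP_eq)
  fix L
  {
    assume "L \<in> solid_pencil (solid e4 e5) (span1 ?p)"
    then have line: "pg_line L" and LS: "L \<subseteq> solid e4 e5" and "span1 ?p \<subseteq> L"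
      and "\<not> L \<subseteq> piP"
      by (auto simp: solid_pencil_def pg_lines_def)
    then have "?p \<in> L" using span1_mem(1) by blast
    obtain z where z: "z \<in> L" "z \<notin> piP" using \<open>\<not> L \<subseteq> piP\<close> by blast
    then obtain \<kappa> where k: "\<kappa> \<noteq> 0" "z$3 = \<kappa> * e4" "z$4 = \<kappa> * e5"
      using solid_outside_piP[OF e] LS by blast
    let ?w = "(1 / \<kappa>) *s z"
    have "?w \<in> L"
      using line z(1) by (rule pg_sub_smult_mem)
    moreover have w: "?w$3 = e4" "?w$4 = e5" using k by simp_all
    moreover have "?w \<notin> piP" using w e by (simp add: piP_eq)
    ultimately have "L = span2 ?p ?w"
      using pg_line_eq_span2[OF line indep2_if_piP_notin_piP[OF p_pi]] \<open>?p \<in> L\<close> by blast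
    then show "L \<in> {span2 ?p w | w. w$3 = e4 \<and> w$4 = e5}" using w by blast
  next
    assume "L \<in> {span2 ?p w | w. w$3 = e4 \<and> w$4 = e5}"
    then obtain w where w: "w$3 = e4" "w$4 = e5" and L: "L = span2 ?p w" by blast
    have "w \<notin> piP" using w e by (simp add: piP_eq)
    then have "pg_line L" "\<not> L \<subseteq> piP"
      using pg_line_span2[OF indep2_if_piP_notin_piP[OF p_pi]] span2_mem(2)[of w ?p] L by auto
    moreover have "L \<subseteq> solid e4 e5"
      unfolding L using w p_pi piP_subset_solid by (intro span2_subset_solid) (auto simp: solid_def)
    moreover have "span1 ?p \<subseteq> L" using span1_subset_span2 L by simp
    ultimately show "L \<in> solid_pencil (solid e4 e5) (span1 ?p)"
      by (simp add: solid_pencil_def pg_lines_def)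
  }
qed

lemma span2_ell_point_eq_iff_solid:
  assumes p: "(p1, p2) \<noteq> (0, 0)" and e: "(e4, e5) \<noteq> (0, 0)"
    and w: "w$3 = e4" "w$4 = e5" and w': "w'$3 = e4" "w'$4 = e5"
  shows "span2 (vec5 p1 p2 0 0 0) w = span2 (vec5 p1 p2 0 0 0) w' \<longleftrightarrow>
    w$2 = w'$2 \<and> ell_cross p1 p2 w = ell_cross p1 p2 w'"
proof (cases "e4 = 0")
  case True
  then show ?thesis using span2_ell_point_eq_iff[OF p, of 4 w w'] e w w' by auto
next
  case False
  then show ?thesis using span2_ell_point_eq_iff[OF p, of 3 w w'] w w' by auto
qed

lemma solid_pencil_eq_range:
  assumes p: "(p1, p2) \<noteq> (0, 0)" and e: "(e4, e5) \<noteq> (0, 0)"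
  shows "solid_pencil (solid e4 e5) (span1 (vec5 p1 p2 0 0 0)) =
    range (\<lambda>(y, k). span2 (vec5 p1 p2 0 0 0) (ell_lift p1 p2 k y e4 e5))"
  unfolding solid_pencil_eq[OF p e]
proof (intro equalityI subsetI)
  fix L
  {
    assume "L \<in> {span2 (vec5 p1 p2 0 0 0) w | w. w$3 = e4 \<and> w$4 = e5}"
    then obtain w where w: "w$3 = e4" "w$4 = e5" "L = span2 (vec5 p1 p2 0 0 0) w" by blast
    then have "L = span2 (vec5 p1 p2 0 0 0) (ell_lift p1 p2 (ell_cross p1 p2 w) (w$2) e4 e5)"
      using span2_ell_point_eq_iff_solid[OF p e] ell_cross_ell_lift[OF p] by simp
    then show "L \<in> range (\<lambda>(y, k). span2 (vec5 p1 p2 0 0 0) (ell_lift p1 p2 k y e4 e5))"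
      by (intro image_eqI[of _ _ "(w$2, ell_cross p1 p2 w)"]) simp_all
  next
    assume "L \<in> range (\<lambda>(y, k). span2 (vec5 p1 p2 0 0 0) (ell_lift p1 p2 k y e4 e5))"
    then obtain y k where "L = span2 (vec5 p1 p2 0 0 0) (ell_lift p1 p2 k y e4 e5)"
      by (auto simp: image_iff)
    moreover have "ell_lift p1 p2 k y e4 e5 $ 3 = e4 \<and> ell_lift p1 p2 k y e4 e5 $ 4 = e5"
      by simp
    ultimately show "L \<in> {span2 (vec5 p1 p2 0 0 0) w | w. w$3 = e4 \<and> w$4 = e5}" by blast
  }
qed

lemma card_solid_pencil:
  assumes p: "(p1, p2) \<noteq> (0, 0)" and e: "(e4, e5) \<noteq> (0, 0)"
  shows "card (solid_pencil (solid e4 e5) (span1 (vec5 p1 p2 0 0 (0::'a::field)))) = CARD('a)^2"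
proof -
  have "inj (\<lambda>(y, k). span2 (vec5 p1 p2 0 0 0) (ell_lift p1 p2 k y e4 e5))"
    using span2_ell_point_eq_iff_solid[OF p e] ell_cross_ell_lift[OF p] by (intro injI) auto
  then show ?thesis
    unfolding solid_pencil_eq_range[OF p e]
    by (simp add: card_image card_cartesian_product power2_eq_square flip: UNIV_Times_UNIV)
qed

context anisotropic_cubic
begin

lemma G_map_adjust_X3:
  assumes e: "(e4, e5) \<noteq> (0, 0)" and w: "w$3 = e4" "w$4 = e5"
  obtains r s where "G_map a b c r s 0 w $ 2 = y"
proof (cases "e4 = 0")
  case True
  then have "e5 \<noteq> 0" using e by simp
  then have "G_map a b c 0 ((y - w$2) / (2 * e5)) 0 w $ 2 = y"
    using w True two_neq_zero by (simp add: G_map_def field_simps)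
  then show ?thesis by (rule that)
next
  case False
  then have "G_map a b c ((y - w$2) / (2 * e4)) 0 0 w $ 2 = y"
    using w two_neq_zero by (simp add: G_map_def field_simps)
  then show ?thesis by (rule that)
qed

text \<open>The substitution \<open>(r, s) = (u e5, - u e4)\<close> fixes \<open>X3\<close>; if \<open>p1 e4 + p2 e5 = 0\<close> it moves
  the cross coordinate linearly in \<open>u\<close>, with a slope that vanishes only at a zero of the
  cubic form.\<close>

lemma G_map_adjust_cross:
  assumes p: "(p1, p2) \<noteq> (0, 0)" and e: "(e4, e5) \<noteq> (0, 0)" and w: "w$3 = e4" "w$4 = e5"
  obtains r s t where "G_map a b c r s t w $ 2 = w$2" "ell_cross p1 p2 (G_map a b c r s t w) = f"
proof (cases "p1 * e4 + p2 * e5 = 0")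
  case False
  define t where "t = (ell_cross p1 p2 w - f) / (p1 * e4 + p2 * e5)"
  have "ell_cross p1 p2 (G_map a b c 0 0 t w) = ell_cross p1 p2 w - t * (p1 * e4 + p2 * e5)"
    using w unfolding ell_cross_def G_map_def by (simp add: algebra_simps)
  then have "ell_cross p1 p2 (G_map a b c 0 0 t w) = f" using False by (simp add: t_def)
  moreover have "G_map a b c 0 0 t w $ 2 = w$2" by (simp add: G_map_def)
  ultimately show ?thesis using that by blast
next
  case True
  define K where "K = p2 * (a * e4 * e5 + e4^2) - p1 * (b * e4 * e5 + c * e5^2)"
  define F where "F = e4^3 + a * e4^2 * e5 + b * e4 * e5^2 + c * e5^3"
  have "e5 * K = (p1 * e4 + p2 * e5) * (a * e4 * e5 + e4^2) - p1 * F"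
    "e4 * K = p2 * F - (p1 * e4 + p2 * e5) * (b * e4 * e5 + c * e5^2)"
    unfolding K_def F_def by algebra+
  moreover have "F \<noteq> 0" using cubic_form_eq_0[of e4 e5] e unfolding F_def by auto
  ultimately have K: "K \<noteq> 0" using True p e by auto
  have cross: "ell_cross p1 p2 (G_map a b c (u * e5) (- u * e4) 0 w) =
      ell_cross p1 p2 w - u * w$2 * (p1 * e4 + p2 * e5) + u * K
      - u^2 * e4 * e5 * (p1 * e4 + p2 * e5)" for u
    using w unfolding ell_cross_def G_map_def K_def by (simp add: algebra_simps power2_eq_square)
  define u where "u = (f - ell_cross p1 p2 w) / K"
  have "ell_cross p1 p2 (G_map a b c (u * e5) (- u * e4) 0 w) = f"
    unfolding cross True using K by (simp add: u_def)
  moreover have "G_map a b c (u * e5) (- u * e4) 0 w $ 2 = w$2"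
    using w by (simp add: G_map_def algebra_simps)
  ultimately show ?thesis using that by blast
qed

lemma G_orbit_solid_pencil:
  assumes p: "(p1, p2) \<noteq> (0, 0)" and e: "(e4, e5) \<noteq> (0, 0)"
    and L: "L \<in> solid_pencil (solid e4 e5) (span1 (vec5 p1 p2 0 0 0))"
  shows "G_orbit a b c L = solid_pencil (solid e4 e5) (span1 (vec5 p1 p2 0 0 0))"
proof -
  let ?p = "vec5 p1 p2 0 0 0"
  obtain w where w: "w$3 = e4" "w$4 = e5" and Lw: "L = span2 ?p w"
    using L unfolding solid_pencil_eq[OF p e] by blast
  show ?thesis
    unfolding Lw G_orbit_span2_ell_point solid_pencil_eq[OF p e]
  proof (intro equalityI subsetI)
    fix L' assume "L' \<in> {span2 ?p (G_map a b c r s t w) | r s t. True}"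
    then obtain r s t where "L' = span2 ?p (G_map a b c r s t w)" by blast
    moreover have "G_map a b c r s t w $ 3 = e4 \<and> G_map a b c r s t w $ 4 = e5"
      using w by (simp add: G_map_def)
    ultimately show "L' \<in> {span2 ?p w' | w'. w'$3 = e4 \<and> w'$4 = e5}" by blast
  next
    fix L' assume "L' \<in> {span2 ?p w' | w'. w'$3 = e4 \<and> w'$4 = e5}"
    then obtain w' where w': "w'$3 = e4" "w'$4 = e5" and L': "L' = span2 ?p w'" by blast
    obtain r1 s1 where g1: "G_map a b c r1 s1 0 w $ 2 = w'$2"
      using G_map_adjust_X3[OF e w] by blast
    define w1 where "w1 = G_map a b c r1 s1 0 w"
    have w1: "w1$3 = e4" "w1$4 = e5" using w unfolding w1_def by (simp_all add: G_map_def)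
    obtain r2 s2 t2 where g2: "G_map a b c r2 s2 t2 w1 $ 2 = w1$2"
      "ell_cross p1 p2 (G_map a b c r2 s2 t2 w1) = ell_cross p1 p2 w'"
      using G_map_adjust_cross[OF p e w1] by blast
    have "G_map a b c r2 s2 t2 w1 $ 3 = e4" "G_map a b c r2 s2 t2 w1 $ 4 = e5"
      using w1 by (simp_all add: G_map_def)
    then have "L' = span2 ?p (G_map a b c r2 s2 t2 w1)"
      unfolding L' using span2_ell_point_eq_iff_solid[OF p e] g1 g2 w' unfolding w1_def by simp
    also have "G_map a b c r2 s2 t2 w1 = G_map a b c (r2 + r1) (s2 + s1) (t2 + 2 * r2 * s1) w"
      unfolding w1_def G_map_G_map by simp
    finally show "L' \<in> {span2 ?p (G_map a b c r s t w) | r s t. True}" by blast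
  qed
qed

end

section \<open>Lines of the solids skew to \<ell> and meeting \<pi>\<close>

definition ell_skew_line :: "'a::field \<Rightarrow> 'a \<Rightarrow> 'a \<Rightarrow> 'a \<Rightarrow> 'a \<Rightarrow> 'a \<Rightarrow> ('a ^ 5) set" where
  "ell_skew_line e4 e5 x1 x2 y1 y2 = span2 (vec5 x1 x2 1 0 0) (vec5 y1 y2 0 e4 e5)"

lemma indep2_ell_skew_line:
  "(e4, e5) \<noteq> (0, 0) \<Longrightarrow> indep2 (vec5 x1 x2 1 0 0) (vec5 y1 y2 0 e4 (e5::'a::field))"
  by (cases "e4 = 0") (auto intro: indep2_minor[of _ 2 _ 4] indep2_minor[of _ 2 _ 3])

lemma ell_skew_line_mem_ell_skew_lines:
  assumes e: "(e4, e5) \<noteq> (0, 0)"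
  shows "ell_skew_line e4 e5 x1 x2 y1 y2 \<in> ell_skew_lines (solid e4 e5)"
proof -
  let ?u = "vec5 x1 x2 1 0 (0::'a)" and ?v = "vec5 y1 y2 0 e4 e5"
  have "?u \<in> piP" "?v \<notin> piP" using e by (simp_all add: piP_eq)
  then have pi: "ell_skew_line e4 e5 x1 x2 y1 y2 \<inter> piP = span1 ?u"
    unfolding ell_skew_line_def by (rule span2_inter_piP)
  have "span1 ?u \<inter> ellL = {0}" by (auto simp: mem_span1 ellL_eq)
  then have "ell_skew_line e4 e5 x1 x2 y1 y2 \<inter> ellL = {0}"
    using pi ellL_subset_piP unfolding ell_skew_line_def by auto
  moreover have "ell_skew_line e4 e5 x1 x2 y1 y2 \<subseteq> solid e4 e5"
    unfolding ell_skew_line_def by (rule span2_subset_solid) (auto simp: solid_def)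
  moreover have "pg_line (ell_skew_line e4 e5 x1 x2 y1 y2)"
    unfolding ell_skew_line_def by (rule pg_line_span2[OF indep2_ell_skew_line[OF e]])
  ultimately show ?thesis
    using pi pg_point_span1[of ?u] by (simp add: ell_skew_lines_def pg_lines_def)
qed

lemma ell_skew_lines_eq:
  assumes e: "(e4, e5) \<noteq> (0, 0)"
  shows "ell_skew_lines (solid e4 e5) =
    {ell_skew_line e4 e5 x1 x2 y1 y2 | x1 x2 y1 y2. True}"
proof (intro equalityI subsetI)
  fix L assume "L \<in> ell_skew_lines (solid e4 e5)"
  then have line: "pg_line L" and LS: "L \<subseteq> solid e4 e5" and Lell: "L \<inter> ellL = {0}"
    and "pg_point (L \<inter> piP)"
    by (auto simp: ell_skew_lines_def pg_lines_def)
  then obtain w where w: "w \<noteq> 0" "L \<inter> piP = span1 w" unfolding pg_point_iff by blast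
  then have "w \<in> L" "w \<in> piP" using span1_mem(1)[of w] by blast+
  then have "w$2 \<noteq> 0" using Lell w(1) by (auto simp: piP_eq ellL_eq)
  define u where "u = (1 / w$2) *s w"
  have uL: "u \<in> L" unfolding u_def using \<open>w \<in> L\<close> line by (rule pg_sub_smult_mem[rotated])
  have u: "u$2 = 1" "u$3 = 0" "u$4 = 0"
    using \<open>w$2 \<noteq> 0\<close> \<open>w \<in> piP\<close> unfolding u_def piP_eq by simp_all
  have "\<not> L \<subseteq> piP"
    using line pg_line_not_point \<open>pg_point (L \<inter> piP)\<close> by (metis inf.absorb_iff1)
  then obtain z where zL: "z \<in> L" and zpi: "z \<notin> piP" by blast
  then obtain \<kappa> where k: "\<kappa> \<noteq> 0" "z$3 = \<kappa> * e4" "z$4 = \<kappa> * e5"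
    using solid_outside_piP[OF e] LS by blast
  define v where "v = (1 / \<kappa>) *s z + (- z$2 / \<kappa>) *s u"
  have vL: "v \<in> L" unfolding v_def using line zL uL by (rule pg_sub_lincomb_mem)
  have v: "v$2 = 0" "v$3 = e4" "v$4 = e5"
    using k u unfolding v_def by (simp_all add: field_simps)
  have "u = vec5 (u$0) (u$1) 1 0 0" "v = vec5 (v$0) (v$1) 0 e4 e5"
    using u v by (simp_all add: vec_eq_iff_5)
  then have "L = ell_skew_line e4 e5 (u$0) (u$1) (v$0) (v$1)"
    using pg_line_eq_span2[OF line indep2_ell_skew_line[OF e]] uL vL
    unfolding ell_skew_line_def by metis
  then show "L \<in> {ell_skew_line e4 e5 x1 x2 y1 y2 | x1 x2 y1 y2. True}" by blast
next
  fix L assume "L \<in> {ell_skew_line e4 e5 x1 x2 y1 y2 | x1 x2 y1 y2. True}"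
  then show "L \<in> ell_skew_lines (solid e4 e5)"
    using ell_skew_line_mem_ell_skew_lines[OF e] by blast
qed

lemma ell_skew_line_eq_iff:
  assumes e: "(e4, e5) \<noteq> (0, 0)"
  shows "ell_skew_line e4 e5 x1 x2 y1 y2 = ell_skew_line e4 e5 x1' x2' y1' y2' \<longleftrightarrow>
    x1 = x1' \<and> x2 = x2' \<and> y1 = y1' \<and> y2 = y2'"
proof
  assume h: "ell_skew_line e4 e5 x1 x2 y1 y2 = ell_skew_line e4 e5 x1' x2' y1' y2'"
  have "vec5 x1 x2 1 0 0 \<in> ell_skew_line e4 e5 x1 x2 y1 y2"
    "vec5 y1 y2 0 e4 e5 \<in> ell_skew_line e4 e5 x1 x2 y1 y2"
    by (simp_all add: ell_skew_line_def)
  then have "vec5 x1 x2 1 0 0 \<in> ell_skew_line e4 e5 x1' x2' y1' y2'"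
    "vec5 y1 y2 0 e4 e5 \<in> ell_skew_line e4 e5 x1' x2' y1' y2'"
    unfolding h by simp_all
  then obtain \<alpha> \<beta> \<gamma> \<delta> where
    A: "vec5 x1 x2 1 0 0 = \<alpha> *s vec5 x1' x2' 1 0 0 + \<beta> *s vec5 y1' y2' 0 e4 e5"
    and B: "vec5 y1 y2 0 e4 e5 = \<gamma> *s vec5 x1' x2' 1 0 0 + \<delta> *s vec5 y1' y2' 0 e4 e5"
    unfolding ell_skew_line_def mem_span2 by blast
  from A have "\<alpha> = 1" "\<beta> * e4 = 0" "\<beta> * e5 = 0" by simp_all
  then have "\<beta> = 0" using e by auto
  with A \<open>\<alpha> = 1\<close> have "x1 = x1'" "x2 = x2'" by simp_all
  from B have "\<gamma> = 0" "e4 = \<delta> * e4" "e5 = \<delta> * e5" by simp_all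
  then have "\<delta> = 1" using e by (metis mult_cancel_right2 prod.inject)
  with B \<open>\<gamma> = 0\<close> have "y1 = y1'" "y2 = y2'" by simp_all
  with \<open>x1 = x1'\<close> \<open>x2 = x2'\<close> show "x1 = x1' \<and> x2 = x2' \<and> y1 = y1' \<and> y2 = y2'" by simp
qed simp

definition ell_skew_y1 :: "'a::field \<Rightarrow> 'a \<Rightarrow> 'a \<Rightarrow> 'a \<Rightarrow> 'a \<Rightarrow> 'a \<Rightarrow> 'a \<Rightarrow> 'a \<Rightarrow> 'a" where
  "ell_skew_y1 a e4 e5 r s t x1 y1 =
     y1 + (r^2 - a * r + s) * e4 + t * e5 - (2 * r * e4 + 2 * s * e5) * (x1 + r)"

definition ell_skew_y2 :: "'a::field \<Rightarrow> 'a \<Rightarrow> 'a \<Rightarrow> 'a \<Rightarrow> 'a \<Rightarrow> 'a \<Rightarrow> 'a \<Rightarrow> 'a \<Rightarrow> 'a \<Rightarrow> 'a" where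
  "ell_skew_y2 b c e4 e5 r s t x2 y2 =
     y2 + (2 * r * s - t) * e4 + (s^2 + b * s - c * r) * e5 - (2 * r * e4 + 2 * s * e5) * (x2 + s)"

lemma G_map_image_ell_skew_line:
  "G_map a b c r s t ` ell_skew_line e4 e5 x1 x2 y1 y2 =
     ell_skew_line e4 e5 (x1 + r) (x2 + s)
       (ell_skew_y1 a e4 e5 r s t x1 y1)
       (ell_skew_y2 b c e4 e5 r s t x2 y2)"
proof -
  let ?k = "2 * r * e4 + 2 * s * e5"
  have "G_map a b c r s t (vec5 x1 x2 1 0 0) = vec5 (x1 + r) (x2 + s) 1 0 0"
    by (simp add: G_map_def)
  moreover have "G_map a b c r s t (vec5 y1 y2 0 e4 e5) =
      vec5 (ell_skew_y1 a e4 e5 r s t x1 y1) (ell_skew_y2 b c e4 e5 r s t x2 y2) 0 e4 e5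
      + ?k *s vec5 (x1 + r) (x2 + s) 1 0 0"
    unfolding vec_eq_iff_5 by (simp add: G_map_def ell_skew_y1_def ell_skew_y2_def algebra_simps)
  ultimately show ?thesis
    unfolding ell_skew_line_def G_map_image_span2 by (simp only: span2_add_multiple)
qed

text \<open>The orbits of \<open>G\<close> on the lines of type (c) in a solid are the level sets of this
  invariant.\<close>

definition ell_skew_invariant :: "'a::field \<Rightarrow> 'a \<Rightarrow> 'a \<Rightarrow> 'a \<Rightarrow> 'a \<Rightarrow> 'a \<Rightarrow> 'a \<Rightarrow> 'a \<Rightarrow> 'a \<Rightarrow> 'a"
  where
  "ell_skew_invariant a b c e4 e5 x1 x2 y1 y2 =
     e4 * y1 + e5 * y2 + (e4 * x1 + e5 * x2)^2
     + (a * e4^2 + c * e5^2) * x1 - (e4^2 + b * e5^2) * x2"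

lemma ell_skew_invariant_G_map:
  "ell_skew_invariant a b c e4 e5 (x1 + r) (x2 + s)
     (ell_skew_y1 a e4 e5 r s t x1 y1)
     (ell_skew_y2 b c e4 e5 r s t x2 y2)
   = ell_skew_invariant a b c e4 e5 x1 x2 y1 y2"
  unfolding ell_skew_invariant_def ell_skew_y1_def ell_skew_y2_def by algebra

lemma card_G_orbit_ell_skew_line:
  fixes e4 e5 :: "'a::field"
  assumes e: "(e4, e5) \<noteq> (0, 0)"
  shows "card (G_orbit a b c (ell_skew_line e4 e5 x1 x2 y1 y2)) = CARD('a)^3"
proof (rule card_G_orbit_if_free)
  fix r s t r' s' t'
  assume h: "G_map a b c r s t ` ell_skew_line e4 e5 x1 x2 y1 y2 =
    G_map a b c r' s' t' ` ell_skew_line e4 e5 x1 x2 y1 y2"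
  then have "r = r'" "s = s'"
    unfolding G_map_image_ell_skew_line ell_skew_line_eq_iff[OF e] by simp_all
  with h have "t * e5 = t' * e5" "t * e4 = t' * e4"
    unfolding G_map_image_ell_skew_line ell_skew_line_eq_iff[OF e]
    by (simp_all add: ell_skew_y1_def ell_skew_y2_def)
  then show "(r, s, t) = (r', s', t')" using e \<open>r = r'\<close> \<open>s = s'\<close> by auto
qed

lemma G_orbit_ell_skew_line_normal:
  obtains z1 z2 where
    "G_orbit a b c (ell_skew_line e4 e5 x1 x2 y1 y2) =
       G_orbit a b c (ell_skew_line e4 e5 0 0 z1 z2)"
    "ell_skew_invariant a b c e4 e5 x1 x2 y1 y2 = e4 * z1 + e5 * z2"
proof -
  let ?z1 = "ell_skew_y1 a e4 e5 (- x1) (- x2) 0 x1 y1"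
  let ?z2 = "ell_skew_y2 b c e4 e5 (- x1) (- x2) 0 x2 y2"
  have "G_map a b c (- x1) (- x2) 0 ` ell_skew_line e4 e5 x1 x2 y1 y2 =
      ell_skew_line e4 e5 (x1 + - x1) (x2 + - x2) ?z1 ?z2"
    by (rule G_map_image_ell_skew_line)
  moreover have "ell_skew_invariant a b c e4 e5 (x1 + - x1) (x2 + - x2) ?z1 ?z2 =
      ell_skew_invariant a b c e4 e5 x1 x2 y1 y2"
    by (rule ell_skew_invariant_G_map)
  ultimately show ?thesis
    using G_orbit_image[of a b c "- x1" "- x2" 0 "ell_skew_line e4 e5 x1 x2 y1 y2"]
    by (intro that[of ?z1 ?z2]) (simp_all add: ell_skew_invariant_def)
qed

text \<open>For \<open>x1 = x2 = 0\<close> the invariant is \<open>e4 y1 + e5 y2\<close>, and the elements \<open>M\<^sub>0\<^sub>,\<^sub>0\<^sub>,\<^sub>t\<close> move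
  \<open>(y1, y2)\<close> along \<open>(e5, - e4)\<close>.\<close>

lemma G_orbit_ell_skew_line_normal_eq:
  assumes e: "(e4, e5) \<noteq> (0, 0)" and z: "e4 * z1 + e5 * z2 = e4 * z1' + e5 * z2'"
  shows "G_orbit a b c (ell_skew_line e4 e5 0 0 z1 z2) =
    G_orbit a b c (ell_skew_line e4 e5 0 0 z1' z2')"
proof -
  obtain t where t: "z1' = z1 + t * e5" "z2' = z2 - t * e4"
  proof (cases "e4 = 0")
    case True
    then show ?thesis using e z by (intro that[of "(z1' - z1) / e5"]) (auto simp: field_simps)
  next
    case False
    then show ?thesis using z by (intro that[of "(z2 - z2') / e4"]) (auto simp: field_simps)
  qed
  have "G_map a b c 0 0 t ` ell_skew_line e4 e5 0 0 z1 z2 = ell_skew_line e4 e5 0 0 z1' z2'"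
    unfolding G_map_image_ell_skew_line t by (simp add: ell_skew_y1_def ell_skew_y2_def)
  then show ?thesis using G_orbit_image[of a b c 0 0 t] by metis
qed

lemma G_orbit_ell_skew_line_eq_iff:
  assumes e: "(e4, e5) \<noteq> (0, 0)"
  shows "G_orbit a b c (ell_skew_line e4 e5 x1 x2 y1 y2) =
      G_orbit a b c (ell_skew_line e4 e5 x1' x2' y1' y2') \<longleftrightarrow>
    ell_skew_invariant a b c e4 e5 x1 x2 y1 y2 = ell_skew_invariant a b c e4 e5 x1' x2' y1' y2'"
proof
  assume "G_orbit a b c (ell_skew_line e4 e5 x1 x2 y1 y2) =
    G_orbit a b c (ell_skew_line e4 e5 x1' x2' y1' y2')"
  then have "ell_skew_line e4 e5 x1' x2' y1' y2' \<in> G_orbit a b c (ell_skew_line e4 e5 x1 x2 y1 y2)"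
    using G_orbit_self by blast
  then show "ell_skew_invariant a b c e4 e5 x1 x2 y1 y2 =
      ell_skew_invariant a b c e4 e5 x1' x2' y1' y2'"
    unfolding G_orbit_eq G_map_image_ell_skew_line
    by (auto simp: ell_skew_line_eq_iff[OF e] ell_skew_invariant_G_map)
next
  assume inv: "ell_skew_invariant a b c e4 e5 x1 x2 y1 y2 =
    ell_skew_invariant a b c e4 e5 x1' x2' y1' y2'"
  obtain z1 z2 where
    z: "G_orbit a b c (ell_skew_line e4 e5 x1 x2 y1 y2) =
        G_orbit a b c (ell_skew_line e4 e5 0 0 z1 z2)"
      "ell_skew_invariant a b c e4 e5 x1 x2 y1 y2 = e4 * z1 + e5 * z2"
    by (rule G_orbit_ell_skew_line_normal)
  obtain z1' z2' where
    z': "G_orbit a b c (ell_skew_line e4 e5 x1' x2' y1' y2') =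
        G_orbit a b c (ell_skew_line e4 e5 0 0 z1' z2')"
      "ell_skew_invariant a b c e4 e5 x1' x2' y1' y2' = e4 * z1' + e5 * z2'"
    by (rule G_orbit_ell_skew_line_normal)
  have "G_orbit a b c (ell_skew_line e4 e5 0 0 z1 z2) =
      G_orbit a b c (ell_skew_line e4 e5 0 0 z1' z2')"
    by (rule G_orbit_ell_skew_line_normal_eq[OF e]) (use z(2) z'(2) inv in simp)
  with z(1) z'(1) show "G_orbit a b c (ell_skew_line e4 e5 x1 x2 y1 y2) =
      G_orbit a b c (ell_skew_line e4 e5 x1' x2' y1' y2')"
    by simp
qed

lemma G_orbit_subset_ell_skew_lines:
  assumes e: "(e4, e5) \<noteq> (0, 0)" and L: "L \<in> ell_skew_lines (solid e4 e5)"
  shows "G_orbit a b c L \<subseteq> ell_skew_lines (solid e4 e5)"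
proof -
  obtain x1 x2 y1 y2 where "L = ell_skew_line e4 e5 x1 x2 y1 y2"
    using L unfolding ell_skew_lines_eq[OF e] by blast
  then show ?thesis
    using ell_skew_line_mem_ell_skew_lines[OF e]
    by (auto simp: G_orbit_eq G_map_image_ell_skew_line)
qed

lemma card_G_orbits_ell_skew_lines:
  fixes e4 e5 :: "'a::field"
  assumes e: "(e4, e5) \<noteq> (0, 0)"
  shows "card (G_orbit a b c ` ell_skew_lines (solid e4 e5)) = CARD('a)"
proof -
  define z1 z2 where "z1 k = (if e4 = 0 then 0 else k / e4)"
    and "z2 k = (if e4 = 0 then k / e5 else 0)" for k
  define rep where "rep k = ell_skew_line e4 e5 0 0 (z1 k) (z2 k)" for k
  have inv_rep: "ell_skew_invariant a b c e4 e5 0 0 (z1 k) (z2 k) = k" for k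
    using e by (auto simp: ell_skew_invariant_def z1_def z2_def)
  have orbit_rep: "G_orbit a b c (ell_skew_line e4 e5 x1 x2 y1 y2) = G_orbit a b c (rep k) \<longleftrightarrow>
      ell_skew_invariant a b c e4 e5 x1 x2 y1 y2 = k" for x1 x2 y1 y2 k
    unfolding rep_def G_orbit_ell_skew_line_eq_iff[OF e] inv_rep ..
  have "G_orbit a b c ` ell_skew_lines (solid e4 e5) = range (\<lambda>k. G_orbit a b c (rep k))"
  proof (intro equalityI subsetI)
    fix X assume "X \<in> G_orbit a b c ` ell_skew_lines (solid e4 e5)"
    then obtain x1 x2 y1 y2 where "X = G_orbit a b c (ell_skew_line e4 e5 x1 x2 y1 y2)"
      unfolding ell_skew_lines_eq[OF e] by blast
    then have "X = G_orbit a b c (rep (ell_skew_invariant a b c e4 e5 x1 x2 y1 y2))"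
      using orbit_rep by blast
    then show "X \<in> range (\<lambda>k. G_orbit a b c (rep k))" by blast
  next
    fix X assume "X \<in> range (\<lambda>k. G_orbit a b c (rep k))"
    then show "X \<in> G_orbit a b c ` ell_skew_lines (solid e4 e5)"
      unfolding rep_def using ell_skew_line_mem_ell_skew_lines[OF e] by blast
  qed
  moreover have "inj (\<lambda>k. G_orbit a b c (rep k))"
    by (rule injI) (metis orbit_rep rep_def)
  ultimately show ?thesis by (simp add: card_image)
qed

section \<open>Lines skew to \<pi>\<close>

definition pi_skew_line :: "'a::field \<Rightarrow> 'a \<Rightarrow> 'a \<Rightarrow> 'a \<Rightarrow> 'a \<Rightarrow> 'a \<Rightarrow> ('a ^ 5) set" where
  "pi_skew_line x1 x2 x3 y1 y2 y3 = span2 (vec5 x1 x2 x3 1 0) (vec5 y1 y2 y3 0 1)"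

lemma pi_skew_line_mem_pi_skew_lines: "pi_skew_line x1 x2 x3 y1 y2 y3 \<in> pi_skew_lines"
proof -
  have ind: "indep2 (vec5 x1 x2 x3 1 0) (vec5 y1 y2 y3 0 (1::'a))"
    by (rule indep2_minor[of _ 3 _ 4]) simp
  have "pi_skew_line x1 x2 x3 y1 y2 y3 \<inter> piP \<subseteq> {0}"
    by (auto simp: pi_skew_line_def mem_span2 piP_eq)
  then have "pi_skew_line x1 x2 x3 y1 y2 y3 \<inter> piP = {0}"
    by (auto simp: pi_skew_line_def piP_eq)
  then show ?thesis
    using pg_line_span2[OF ind] by (simp add: pi_skew_lines_def pg_lines_def pi_skew_line_def)
qed

lemma lincomb_in_piP_if_det_eq_0:
  assumes "u$3 * v$4 - u$4 * v$3 = 0"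
  obtains \<alpha> \<beta> where "(\<alpha>, \<beta>) \<noteq> (0, 0)" "\<alpha> *s u + \<beta> *s v \<in> piP"
proof -
  consider "(u$4, v$4) \<noteq> (0, 0)" | "(u$3, v$3) \<noteq> (0, 0)" | "u \<in> piP"
    by (fastforce simp: piP_eq)
  then show ?thesis
  proof cases
    case 1
    then show ?thesis
      using assms by (intro that[of "v$4" "- u$4"]) (auto simp: piP_eq algebra_simps)
  next
    case 2
    then show ?thesis
      using assms by (intro that[of "v$3" "- u$3"]) (auto simp: piP_eq algebra_simps)
  next
    case 3
    then show ?thesis by (intro that[of 1 0]) simp_all
  qed
qed

lemma pi_skew_lines_eq:
  "pi_skew_lines = {pi_skew_line x1 x2 x3 y1 y2 y3 | x1 x2 x3 y1 y2 y3. True}"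
proof (intro equalityI subsetI)
  fix L assume "L \<in> pi_skew_lines"
  then have line: "pg_line L" and Lpi: "L \<inter> piP = {0}"
    by (auto simp: pi_skew_lines_def pg_lines_def)
  obtain u v where uv: "indep2 u v" "L = span2 u v" using line unfolding pg_line_iff by blast
  define d where "d = u$3 * v$4 - u$4 * v$3"
  have "d \<noteq> 0"
  proof
    assume "d = 0"
    then obtain \<alpha> \<beta> where "(\<alpha>, \<beta>) \<noteq> (0, 0)" "\<alpha> *s u + \<beta> *s v \<in> piP"
      using lincomb_in_piP_if_det_eq_0 unfolding d_def by blast
    moreover have "\<alpha> *s u + \<beta> *s v \<in> L" unfolding uv(2) mem_span2 by blast
    ultimately show False using Lpi indep2_lincomb_nonzero[OF uv(1)] by blast
  qed
  define u' where "u' = (v$4 / d) *s u + (- u$4 / d) *s v"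
  define v' where "v' = (- v$3 / d) *s u + (u$3 / d) *s v"
  have "u'$3 = (u$3 * v$4 - u$4 * v$3) / d" "v'$4 = (u$3 * v$4 - u$4 * v$3) / d"
    "u'$4 = 0" "v'$3 = 0"
    unfolding u'_def v'_def by (simp_all add: diff_divide_distrib mult.commute)
  then have comps: "u'$3 = 1" "v'$4 = 1" "u'$4 = 0" "v'$3 = 0"
    using \<open>d \<noteq> 0\<close> by (simp_all add: d_def)
  have "u' \<in> L" "v' \<in> L" unfolding uv(2) u'_def v'_def mem_span2 by blast+
  moreover have "indep2 u' v'" using comps by (intro indep2_minor[of _ 3 _ 4]) simp
  ultimately have "L = span2 u' v'" using pg_line_eq_span2[OF line] by blast
  also have "\<dots> = pi_skew_line (u'$0) (u'$1) (u'$2) (v'$0) (v'$1) (v'$2)"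
    unfolding pi_skew_line_def using comps
    by (intro arg_cong2[of _ _ _ _ span2]) (simp_all add: vec_eq_iff_5)
  finally have "L = pi_skew_line (u'$0) (u'$1) (u'$2) (v'$0) (v'$1) (v'$2)" .
  then show "L \<in> {pi_skew_line x1 x2 x3 y1 y2 y3 | x1 x2 x3 y1 y2 y3. True}" by blast
qed (use pi_skew_line_mem_pi_skew_lines in blast)

lemma pi_skew_line_eq_iff:
  "pi_skew_line x1 x2 x3 y1 y2 y3 = pi_skew_line x1' x2' x3' y1' y2' y3' \<longleftrightarrow>
     x1 = x1' \<and> x2 = x2' \<and> x3 = x3' \<and> y1 = y1' \<and> y2 = y2' \<and> y3 = y3'"
proof
  assume h: "pi_skew_line x1 x2 x3 y1 y2 y3 = pi_skew_line x1' x2' x3' y1' y2' y3'"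
  have "vec5 x1 x2 x3 1 0 \<in> pi_skew_line x1 x2 x3 y1 y2 y3"
    "vec5 y1 y2 y3 0 1 \<in> pi_skew_line x1 x2 x3 y1 y2 y3"
    by (simp_all add: pi_skew_line_def)
  then have "vec5 x1 x2 x3 1 0 \<in> pi_skew_line x1' x2' x3' y1' y2' y3'"
    "vec5 y1 y2 y3 0 1 \<in> pi_skew_line x1' x2' x3' y1' y2' y3'"
    unfolding h by simp_all
  then obtain \<alpha> \<beta> \<gamma> \<delta> where
    "vec5 x1 x2 x3 1 0 = \<alpha> *s vec5 x1' x2' x3' 1 0 + \<beta> *s vec5 y1' y2' y3' 0 1"
    "vec5 y1 y2 y3 0 1 = \<gamma> *s vec5 x1' x2' x3' 1 0 + \<delta> *s vec5 y1' y2' y3' 0 1"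
    unfolding h pi_skew_line_def mem_span2 by blast
  then show "x1 = x1' \<and> x2 = x2' \<and> x3 = x3' \<and> y1 = y1' \<and> y2 = y2' \<and> y3 = y3'" by simp
qed simp

lemma G_map_image_pi_skew_line:
  "G_map a b c r s t ` pi_skew_line x1 x2 x3 y1 y2 y3 =
     pi_skew_line (x1 + r * x3 + (r^2 - a * r + s)) (x2 + s * x3 + (2 * r * s - t)) (x3 + 2 * r)
       (y1 + r * y3 + t) (y2 + s * y3 + (s^2 + b * s - c * r)) (y3 + 2 * s)"
  unfolding pi_skew_line_def G_map_image_span2 by (simp add: G_map_def)

lemma G_orbit_subset_pi_skew_lines:
  assumes "L \<in> pi_skew_lines"
  shows "G_orbit a b c L \<subseteq> pi_skew_lines"
proof
  fix L' assume "L' \<in> G_orbit a b c L"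
  then obtain r s t where "L' = G_map a b c r s t ` L" unfolding G_orbit_eq by blast
  moreover obtain x1 x2 x3 y1 y2 y3 where "L = pi_skew_line x1 x2 x3 y1 y2 y3"
    using assms unfolding pi_skew_lines_eq by blast
  ultimately show "L' \<in> pi_skew_lines"
    by (simp add: G_map_image_pi_skew_line pi_skew_line_mem_pi_skew_lines)
qed

lemma Union_G_orbits_pi_skew_lines:
  fixes a b c :: "'a::field"
  shows "\<Union> (G_orbit a b c ` pi_skew_lines) = pi_skew_lines"
proof (intro equalityI subsetI)
  fix L assume "L \<in> \<Union> (G_orbit a b c ` pi_skew_lines)"
  then show "L \<in> pi_skew_lines" using G_orbit_subset_pi_skew_lines by blast
next
  fix L :: "('a ^ 5) set" assume "L \<in> pi_skew_lines"
  then show "L \<in> \<Union> (G_orbit a b c ` pi_skew_lines)" using G_orbit_self by blast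
qed

lemma G_map_nth_3_4 [simp]: "G_map a b c r s t v $ 3 = v$3" "G_map a b c r s t v $ 4 = v$4"
  by (simp_all add: G_map_def)

context anisotropic_cubic
begin

text \<open>These are the fixed-point equations of \<open>M\<^sub>r\<^sub>,\<^sub>s\<^sub>,\<^sub>t\<close> at a point \<open>(_, _, z, \<alpha>, \<beta>)\<close>;
  eliminating \<open>r\<close>, \<open>s\<close>, \<open>t\<close> leaves the cubic form in \<open>(\<alpha>, \<beta>)\<close>.\<close>

lemma fixed_point_equations_imp_zero:
  assumes nid: "(r, s, t) \<noteq> (0, 0, 0)"
    and E0: "r * z + (r^2 - a * r + s) * \<alpha> + t * \<beta> = 0"
    and E1: "s * z + (2 * r * s - t) * \<alpha> + (s^2 + b * s - c * r) * \<beta> = 0"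
    and E2: "r * \<alpha> + s * \<beta> = 0"
  shows "\<alpha> = 0 \<and> \<beta> = 0"
proof (cases "r = 0 \<and> s = 0")
  case True
  then have "t \<noteq> 0" using nid by simp
  then show ?thesis using E0 E1 True by simp
next
  case False
  show ?thesis
  proof (rule ccontr)
    assume ab: "\<not> (\<alpha> = 0 \<and> \<beta> = 0)"
    obtain l where rl: "r = l * \<beta>" and sl: "s = - l * \<alpha>"
    proof (cases "\<beta> = 0")
      case True
      then show ?thesis using ab E2 by (intro that[of "- s / \<alpha>"]) auto
    next
      case False
      then have "s = - (r / \<beta>) * \<alpha>" using E2
        by (simp add: field_simps) (metis add.commute add_eq_0_iff mult.commute)
      then show ?thesis using False by (intro that[of "r / \<beta>"]) simp_all
    qed
    have "l \<noteq> 0" using False rl sl by auto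
    moreover have "l * (\<alpha>^3 + a * \<alpha>^2 * \<beta> + b * \<alpha> * \<beta>^2 + c * \<beta>^3) =
        - (\<alpha> * (r * z + (r^2 - a * r + s) * \<alpha> + t * \<beta>)
         + \<beta> * (s * z + (2 * r * s - t) * \<alpha> + (s^2 + b * s - c * r) * \<beta>))"
      unfolding rl sl by algebra
    ultimately have "\<alpha>^3 + a * \<alpha>^2 * \<beta> + b * \<alpha> * \<beta>^2 + c * \<beta>^3 = 0"
      using E0 E1 by simp
    then show False using cubic_form_eq_0 ab by blast
  qed
qed

lemma G_map_fixed_in_piP:
  assumes fixed: "G_map a b c r s t x = x" and nid: "(r, s, t) \<noteq> (0, 0, 0)"
  shows "x \<in> piP"
proof -
  have E0: "r * x$2 + (r^2 - a * r + s) * x$3 + t * x$4 = 0"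
    and E1: "s * x$2 + (2 * r * s - t) * x$3 + (s^2 + b * s - c * r) * x$4 = 0"
    and E2: "2 * (r * x$3 + s * x$4) = 0"
    using fixed unfolding G_map_def vec_eq_iff_5 by (simp_all add: algebra_simps)
  have "r * x$3 + s * x$4 = 0" using E2 two_neq_zero by (metis mult_eq_0_iff)
  then have "x$3 = 0 \<and> x$4 = 0" by (rule fixed_point_equations_imp_zero[OF nid E0 E1])
  then show ?thesis unfolding piP_eq by simp
qed

lemma G_orbit_pi_skew_lines_disjoint:
  assumes L: "L \<in> pi_skew_lines" and L1: "L1 \<in> G_orbit a b c L" and L2: "L2 \<in> G_orbit a b c L"
    and "L1 \<noteq> L2"
  shows "L1 \<inter> L2 = {0}"
proof -
  have "L1 \<in> pi_skew_lines" using G_orbit_subset_pi_skew_lines L L1 by blast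
  then have line: "pg_line L1" and L1pi: "L1 \<inter> piP = {0}"
    by (auto simp: pi_skew_lines_def pg_lines_def)
  have "L2 \<in> G_orbit a b c L1" using G_orbit_eq_if_mem[OF L1] L2 by simp
  then obtain r s t where L2: "L2 = G_map a b c r s t ` L1" unfolding G_orbit_eq by blast
  have nid: "(r, s, t) \<noteq> (0, 0, 0)"
  proof
    assume "(r, s, t) = (0, 0, 0)"
    then have "L2 = L1" using L2 by (simp add: G_map_0)
    with \<open>L1 \<noteq> L2\<close> show False by simp
  qed
  show ?thesis
  proof
    show "L1 \<inter> L2 \<subseteq> {0}"
    proof
      fix x assume "x \<in> L1 \<inter> L2"
      then obtain y where x: "x \<in> L1" "y \<in> L1" "x = G_map a b c r s t y" using L2 by blast
      have "x - y \<in> L1" using pg_sub_lincomb_mem[OF line x(1,2), of 1 "-1"]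
        by (simp add: vector_smult_lneg)
      moreover have "x - y \<in> piP" using x(3) by (simp add: piP_eq)
      ultimately have "x - y = 0" using L1pi by blast
      then have "G_map a b c r s t x = x" using x(3) by simp
      then have "x \<in> piP" by (rule G_map_fixed_in_piP[OF _ nid])
      then show "x \<in> {0}" using L1pi x(1) by blast
    qed
    have "0 \<in> L1" using line by (rule pg_sub_zero)
    moreover have "G_map a b c r s t 0 = 0" by (simp add: G_map_eq_0_iff)
    ultimately show "{0} \<subseteq> L1 \<inter> L2" unfolding L2 by force
  qed
qed

lemma card_G_orbit_pi_skew_line:
  "card (G_orbit a b c (pi_skew_line x1 x2 x3 y1 y2 y3)) = CARD('a)^3"
proof (rule card_G_orbit_if_free)
  fix r s t r' s' t'
  assume "G_map a b c r s t ` pi_skew_line x1 x2 x3 y1 y2 y3 =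
    G_map a b c r' s' t' ` pi_skew_line x1 x2 x3 y1 y2 y3"
  then have "2 * r = 2 * r'" "2 * s = 2 * s'" "r * y3 + t = r' * y3 + t'"
    unfolding G_map_image_pi_skew_line pi_skew_line_eq_iff by simp_all
  then show "(r, s, t) = (r', s', t')" using two_neq_zero by simp
qed

lemma G_orbit_pi_skew_line_normal:
  obtains x1' x2' y2' where
    "G_orbit a b c (pi_skew_line x1 x2 x3 y1 y2 y3) =
       G_orbit a b c (pi_skew_line x1' x2' 0 0 y2' 0)"
proof -
  define r s t where "r = - x3 / 2" and "s = - y3 / 2" and "t = - (y1 + r * y3)"
  have "x3 + 2 * r = 0" "y3 + 2 * s = 0" "y1 + r * y3 + t = 0"
    using two_neq_zero by (simp_all add: r_def s_def t_def)
  then show ?thesis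
    using that G_orbit_image[of a b c r s t "pi_skew_line x1 x2 x3 y1 y2 y3"]
    unfolding G_map_image_pi_skew_line by metis
qed

lemma card_G_orbits_pi_skew_lines: "card (G_orbit a b c ` pi_skew_lines) = CARD('a)^3"
proof -
  have "G_orbit a b c ` pi_skew_lines =
      range (\<lambda>(x1, x2, y2). G_orbit a b c (pi_skew_line x1 x2 0 0 y2 0))"
  proof (intro equalityI subsetI)
    fix X assume "X \<in> G_orbit a b c ` pi_skew_lines"
    then obtain x1 x2 x3 y1 y2 y3 where "X = G_orbit a b c (pi_skew_line x1 x2 x3 y1 y2 y3)"
      unfolding pi_skew_lines_eq by blast
    then obtain x1' x2' y2' where "X = G_orbit a b c (pi_skew_line x1' x2' 0 0 y2' 0)"
      using G_orbit_pi_skew_line_normal by metis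
    then show "X \<in> range (\<lambda>(x1, x2, y2). G_orbit a b c (pi_skew_line x1 x2 0 0 y2 0))"
      by (intro image_eqI[of _ _ "(x1', x2', y2')"]) simp_all
  next
    fix X assume "X \<in> range (\<lambda>(x1, x2, y2). G_orbit a b c (pi_skew_line x1 x2 0 0 y2 0))"
    then obtain x1 x2 y2 where "X = G_orbit a b c (pi_skew_line x1 x2 0 0 y2 0)" by auto
    then show "X \<in> G_orbit a b c ` pi_skew_lines"
      using pi_skew_line_mem_pi_skew_lines by blast
  qed
  moreover have "inj (\<lambda>(x1, x2, y2). G_orbit a b c (pi_skew_line x1 x2 0 0 y2 0))"
  proof (rule injI)
    fix x y :: "'a \<times> 'a \<times> 'a"
    obtain x1 x2 y2 x1' x2' y2' where xy: "x = (x1, x2, y2)" "y = (x1', x2', y2')"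
      using prod_cases3 by metis
    assume "(\<lambda>(x1, x2, y2). G_orbit a b c (pi_skew_line x1 x2 0 0 y2 0)) x =
      (\<lambda>(x1, x2, y2). G_orbit a b c (pi_skew_line x1 x2 0 0 y2 0)) y"
    then have "pi_skew_line x1' x2' 0 0 y2' 0 \<in> G_orbit a b c (pi_skew_line x1 x2 0 0 y2 0)"
      using G_orbit_self unfolding xy by (metis case_prod_conv)
    then obtain r s t where h: "pi_skew_line x1' x2' 0 0 y2' 0 =
        pi_skew_line (x1 + r * 0 + (r^2 - a * r + s)) (x2 + s * 0 + (2 * r * s - t)) (0 + 2 * r)
          (0 + r * 0 + t) (y2 + s * 0 + (s^2 + b * s - c * r)) (0 + 2 * s)"
      unfolding G_orbit_eq G_map_image_pi_skew_line by blast
    then have "r = 0" "s = 0" "t = 0"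
      using two_neq_zero unfolding pi_skew_line_eq_iff by simp_all
    with h show "x = y" using xy unfolding pi_skew_line_eq_iff by simp
  qed
  ultimately show ?thesis
    by (simp add: card_image card_cartesian_product power3_eq_cube flip: UNIV_Times_UNIV)
qed

end

lemma ellL_neq_0: "ellL \<noteq> ({0} :: ('a::field ^ 5) set)"
proof -
  have "vec5 1 0 0 0 0 \<in> (ellL :: ('a ^ 5) set)" by (simp add: ellL_eq)
  moreover have "vec5 1 0 0 0 0 \<noteq> (0 :: 'a ^ 5)" by simp
  ultimately show ?thesis by blast
qed

lemma ellL_not_in_classes:
  fixes S P :: "('a::field ^ 5) set"
  shows "ellL \<notin> plane_pencil P" "ellL \<notin> solid_pencil S P" "ellL \<notin> ell_skew_lines S"
    "(ellL :: ('a ^ 5) set) \<notin> pi_skew_lines"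
proof -
  show "ellL \<notin> plane_pencil P" by (simp add: plane_pencil_def)
  show "ellL \<notin> solid_pencil S P" by (simp add: solid_pencil_def ellL_subset_piP)
  show "ellL \<notin> ell_skew_lines S" by (simp add: ell_skew_lines_def ellL_neq_0)
  have "(ellL :: ('a ^ 5) set) \<inter> piP \<noteq> {0}" using ellL_subset_piP ellL_neq_0 by blast
  then show "(ellL :: ('a ^ 5) set) \<notin> pi_skew_lines" unfolding pi_skew_lines_def by blast
qed

lemma plane_pencil_nonempty: "P \<in> ell_points \<Longrightarrow> plane_pencil P \<noteq> {}"
  by (elim ell_pointE) (simp add: plane_pencil_eq_range)

lemma solid_pencil_nonempty:
  "P \<in> ell_points \<Longrightarrow> (e4, e5) \<noteq> (0, 0) \<Longrightarrow> solid_pencil (solid e4 e5) P \<noteq> {}"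
  by (elim ell_pointE) (simp add: solid_pencil_eq_range)

lemma ell_skew_lines_Solid_disjoint:
  fixes \<omega> :: "'a::{field,finite}"
  assumes "primitive_element \<omega>" "i \<in> {1..CARD('a) + 1}" "j \<in> {1..CARD('a) + 1}" "i \<noteq> j"
  shows "ell_skew_lines (Solid \<omega> i) \<inter> ell_skew_lines (Solid \<omega> j) = {}"
proof -
  have False if L: "L \<in> ell_skew_lines (Solid \<omega> i)" "L \<in> ell_skew_lines (Solid \<omega> j)" for L
  proof -
    have "L \<subseteq> piP" using L Solid_inter_subset_piP[OF assms] by (auto simp: ell_skew_lines_def)
    then have "pg_point L" using L by (simp add: ell_skew_lines_def Int_absorb2)
    then show False using L pg_line_not_point by (auto simp: ell_skew_lines_def pg_lines_def)
  qed
  then show ?thesis by blast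
qed

lemma G_orbit_eq_plane_pencil:
  "P \<in> ell_points \<Longrightarrow> L \<in> plane_pencil P \<Longrightarrow> G_orbit a b c L = plane_pencil P"
  by (elim ell_pointE) (simp add: G_orbit_plane_pencil)

lemma card_plane_pencil_ell_point:
  fixes P :: "('a::field ^ 5) set"
  shows "P \<in> ell_points \<Longrightarrow> card (plane_pencil P) = CARD('a)"
  by (elim ell_pointE) (simp add: card_plane_pencil)

lemma card_plane_pencils:
  "card (plane_pencil ` (ell_points :: ('a::{field,finite} ^ 5) set set)) = CARD('a) + 1"
proof -
  have "inj_on plane_pencil (ell_points :: ('a ^ 5) set set)"
  proof (rule inj_onI, rule ccontr)
    fix P P' :: "('a ^ 5) set"
    assume P: "P \<in> ell_points" "P' \<in> ell_points" "plane_pencil P = plane_pencil P'" "P \<noteq> P'"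
    then obtain L where "L \<in> plane_pencil P" "L \<in> plane_pencil P'"
      using plane_pencil_nonempty by blast
    then show False
      using pg_line_eq_ellL_if_two_ell_points[OF P(1,2,4)]
      by (auto simp: plane_pencil_def pg_lines_def)
  qed
  then show ?thesis by (simp add: card_image card_ell_points)
qed

lemma G_orbit_eq_solid_pencil:
  fixes \<omega> :: "'a::{field,finite}"
  assumes "anisotropic_cubic a b c" "i \<in> {1..CARD('a) + 1}" "P \<in> ell_points"
    and "L \<in> solid_pencil (Solid \<omega> i) P"
  shows "G_orbit a b c L = solid_pencil (Solid \<omega> i) P"
  using assms anisotropic_cubic.G_orbit_solid_pencil
  by (metis Solid_eq_solid ell_pointE)

lemma card_solid_pencil_ell_point:
  fixes \<omega> :: "'a::{field,finite}"
  shows "i \<in> {1..CARD('a) + 1} \<Longrightarrow> P \<in> ell_points \<Longrightarrow> card (solid_pencil (Solid \<omega> i) P) = CARD('a)^2"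
  by (metis Solid_eq_solid card_solid_pencil ell_pointE)

lemma solid_pencil_Solid_nonempty:
  fixes \<omega> :: "'a::{field,finite}"
  assumes "i \<in> {1..CARD('a) + 1}" "P \<in> ell_points"
  shows "solid_pencil (Solid \<omega> i) P \<noteq> {}"
proof -
  obtain e4 e5 where "(e4, e5) \<noteq> (0, 0)" "Solid \<omega> i = solid e4 e5"
    using Solid_eq_solid[OF assms(1)] by blast
  then show ?thesis using solid_pencil_nonempty[OF assms(2)] by simp
qed

lemma solid_pencil_Solid_eqD:
  fixes \<omega> :: "'a::{field,finite}"
  assumes prim: "primitive_element \<omega>"
    and i: "i \<in> {1..CARD('a) + 1}" "j \<in> {1..CARD('a) + 1}" and P: "P \<in> ell_points" "P' \<in> ell_points"
    and eq: "solid_pencil (Solid \<omega> i) P = solid_pencil (Solid \<omega> j) P'"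
  shows "i = j \<and> P = P'"
proof -
  obtain L where L: "L \<in> solid_pencil (Solid \<omega> i) P"
    using solid_pencil_Solid_nonempty[OF i(1) P(1)] by blast
  then have L': "L \<in> solid_pencil (Solid \<omega> j) P'" using eq by simp
  have line: "pg_line L" and LS: "L \<subseteq> Solid \<omega> i" "L \<subseteq> Solid \<omega> j"
    and PL: "P \<subseteq> L" "P' \<subseteq> L" and notpi: "\<not> L \<subseteq> piP"
    using L L' by (simp_all add: solid_pencil_def pg_lines_def)
  have "i = j"
  proof (rule ccontr)
    assume "i \<noteq> j"
    then have "L \<subseteq> piP"
      using Int_greatest[OF LS] Solid_inter_subset_piP[OF prim i] by blast
    with notpi show False ..
  qed
  moreover have "P = P'"
  proof (rule ccontr)
    assume "P \<noteq> P'"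
    then have "L = ellL" by (rule pg_line_eq_ellL_if_two_ell_points[OF P _ line PL])
    with notpi ellL_subset_piP show False by blast
  qed
  ultimately show ?thesis by simp
qed

lemma card_solid_pencils:
  fixes \<omega> :: "'a::{field,finite}"
  assumes prim: "primitive_element \<omega>"
  shows "card {solid_pencil (Solid \<omega> i) P | i P. i \<in> {1..CARD('a) + 1} \<and> P \<in> ell_points} =
    (CARD('a) + 1)^2"
proof -
  let ?I = "{1..CARD('a) + 1}"
  have "inj_on (\<lambda>(i, P). solid_pencil (Solid \<omega> i) P) (?I \<times> ell_points)"
  proof (rule inj_onI, clarify)
    fix i j P P' assume "i \<in> ?I" "j \<in> ?I" "P \<in> ell_points" "P' \<in> ell_points"
      "solid_pencil (Solid \<omega> i) P = solid_pencil (Solid \<omega> j) P'"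
    then show "i = j \<and> P = P'" by (rule solid_pencil_Solid_eqD[OF prim])
  qed
  moreover have "{solid_pencil (Solid \<omega> i) P | i P. i \<in> ?I \<and> P \<in> ell_points} =
      (\<lambda>(i, P). solid_pencil (Solid \<omega> i) P) ` (?I \<times> ell_points)"
  proof (intro equalityI subsetI)
    fix X assume "X \<in> {solid_pencil (Solid \<omega> i) P | i P. i \<in> ?I \<and> P \<in> ell_points}"
    then obtain i P where "X = solid_pencil (Solid \<omega> i) P" "i \<in> ?I" "P \<in> ell_points" by blast
    then show "X \<in> (\<lambda>(i, P). solid_pencil (Solid \<omega> i) P) ` (?I \<times> ell_points)"
      by (intro image_eqI[of _ _ "(i, P)"]) simp_all
  next
    fix X assume "X \<in> (\<lambda>(i, P). solid_pencil (Solid \<omega> i) P) ` (?I \<times> ell_points)"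
    then obtain i P where "X = solid_pencil (Solid \<omega> i) P" "i \<in> ?I" "P \<in> ell_points" by auto
    then show "X \<in> {solid_pencil (Solid \<omega> i) P | i P. i \<in> ?I \<and> P \<in> ell_points}" by blast
  qed
  ultimately show ?thesis
    by (simp add: card_image card_cartesian_product card_ell_points power2_eq_square)
qed

lemma card_G_orbit_mem_ell_skew_lines_Solid:
  fixes \<omega> :: "'a::{field,finite}"
  assumes "i \<in> {1..CARD('a) + 1}" "L \<in> ell_skew_lines (Solid \<omega> i)"
  shows "card (G_orbit a b c L) = CARD('a)^3"
proof -
  obtain e4 e5 where e: "(e4, e5) \<noteq> (0, 0)" "Solid \<omega> i = solid e4 e5"
    using Solid_eq_solid[OF assms(1)] by blast
  have "L \<in> ell_skew_lines (solid e4 e5)" using assms(2) e(2) by simp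
  then obtain x1 x2 y1 y2 where "L = ell_skew_line e4 e5 x1 x2 y1 y2"
    unfolding ell_skew_lines_eq[OF e(1)] by blast
  then show ?thesis using card_G_orbit_ell_skew_line[OF e(1)] by simp
qed

lemma card_G_orbits_Solid_ell_skew_lines:
  fixes \<omega> :: "'a::{field,finite}"
  assumes "i \<in> {1..CARD('a) + 1}"
  shows "card (G_orbit a b c ` ell_skew_lines (Solid \<omega> i)) = CARD('a)"
proof -
  obtain e4 e5 where e: "(e4, e5) \<noteq> (0, 0)" "Solid \<omega> i = solid e4 e5"
    using Solid_eq_solid[OF assms] by blast
  then show ?thesis using card_G_orbits_ell_skew_lines[OF e(1)] by simp
qed

lemma card_Union_G_orbits_ell_skew_lines:
  fixes \<omega> :: "'a::{field,finite}"
  assumes prim: "primitive_element \<omega>"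
  shows "card (\<Union>i\<in>{1..CARD('a) + 1}. G_orbit a b c ` ell_skew_lines (Solid \<omega> i)) =
    CARD('a) * (CARD('a) + 1)"
proof -
  let ?I = "{1..CARD('a) + 1}"
  have "G_orbit a b c ` ell_skew_lines (Solid \<omega> i) \<inter>
      G_orbit a b c ` ell_skew_lines (Solid \<omega> j) = {}"
    if ij: "i \<in> ?I" "j \<in> ?I" "i \<noteq> j" for i j
  proof -
    have "L \<in> ell_skew_lines (Solid \<omega> j)"
      if "L \<in> ell_skew_lines (Solid \<omega> i)" "L' \<in> ell_skew_lines (Solid \<omega> j)"
        "G_orbit a b c L = G_orbit a b c L'" for L L'
    proof -
      obtain e4 e5 where e: "(e4, e5) \<noteq> (0, 0)" "Solid \<omega> j = solid e4 e5"
        using Solid_eq_solid[OF ij(2)] by blast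
      have "L \<in> G_orbit a b c L'" using G_orbit_self[of L a b c] that(3) by simp
      moreover have "L' \<in> ell_skew_lines (solid e4 e5)" using that(2) e(2) by simp
      ultimately have "L \<in> ell_skew_lines (solid e4 e5)"
        using G_orbit_subset_ell_skew_lines[OF e(1), of L' a b c] by blast
      with e(2) show ?thesis by simp
    qed
    then show ?thesis using ell_skew_lines_Solid_disjoint[OF prim ij] by blast
  qed
  then have "card (\<Union>i\<in>?I. G_orbit a b c ` ell_skew_lines (Solid \<omega> i)) =
      (\<Sum>i\<in>?I. card (G_orbit a b c ` ell_skew_lines (Solid \<omega> i)))"
    by (intro card_UN_disjoint) auto
  also have "\<dots> = (\<Sum>i\<in>?I. CARD('a))" by (simp add: card_G_orbits_Solid_ell_skew_lines)
  finally show ?thesis by simp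
qed

lemma card_G_orbit_mem_pi_skew_lines:
  fixes a b c :: "'a::field"
  assumes "anisotropic_cubic a b c" "L \<in> pi_skew_lines"
  shows "card (G_orbit a b c L) = CARD('a)^3"
proof -
  obtain x1 x2 x3 y1 y2 y3 where "L = pi_skew_line x1 x2 x3 y1 y2 y3"
    using assms(2) unfolding pi_skew_lines_eq by blast
  then show ?thesis using anisotropic_cubic.card_G_orbit_pi_skew_line[OF assms(1)] by simp
qed

lemma plane_pencil_mem_G_orbits:
  assumes "P \<in> ell_points"
  shows "plane_pencil P \<in> {G_orbit a b c L | L. L \<in> pg_lines \<and> L \<noteq> ellL}"
proof -
  obtain L where L: "L \<in> plane_pencil P" using plane_pencil_nonempty[OF assms] by blast
  then have "L \<in> pg_lines" "L \<noteq> ellL" using ellL_not_in_classes(1) by (auto simp: plane_pencil_def)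
  moreover have "plane_pencil P = G_orbit a b c L" using G_orbit_eq_plane_pencil[OF assms L] by simp
  ultimately show ?thesis by blast
qed

lemma solid_pencil_mem_G_orbits:
  fixes \<omega> :: "'a::{field,finite}"
  assumes "anisotropic_cubic a b c" "i \<in> {1..CARD('a) + 1}" "P \<in> ell_points"
  shows "solid_pencil (Solid \<omega> i) P \<in> {G_orbit a b c L | L. L \<in> pg_lines \<and> L \<noteq> ellL}"
proof -
  obtain L where L: "L \<in> solid_pencil (Solid \<omega> i) P"
    using solid_pencil_Solid_nonempty[OF assms(2,3)] by blast
  then have "L \<in> pg_lines" "L \<noteq> ellL" using ellL_not_in_classes(2) by (auto simp: solid_pencil_def)
  moreover have "solid_pencil (Solid \<omega> i) P = G_orbit a b c L"
    using G_orbit_eq_solid_pencil[OF assms L] by simp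
  ultimately show ?thesis by blast
qed

lemma G_orbits_of_lines:
  fixes \<omega> :: "'a::{field,finite}"
  assumes abc: "anisotropic_cubic a b c" and prim: "primitive_element \<omega>"
  shows "{G_orbit a b c L | L. L \<in> pg_lines \<and> L \<noteq> ellL} =
    plane_pencil ` ell_points
    \<union> {solid_pencil (Solid \<omega> i) P | i P. i \<in> {1..CARD('a) + 1} \<and> P \<in> ell_points}
    \<union> (\<Union>i\<in>{1..CARD('a) + 1}. G_orbit a b c ` ell_skew_lines (Solid \<omega> i))
    \<union> G_orbit a b c ` pi_skew_lines"
    (is "?orbits = ?A \<union> ?B \<union> ?C \<union> ?D")
proof (intro equalityI subsetI)
  fix X assume "X \<in> ?orbits"
  then obtain L where X: "X = G_orbit a b c L" and L: "L \<in> pg_lines" "L \<noteq> ellL" by blast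
  from line_classification[OF prim L] show "X \<in> ?A \<union> ?B \<union> ?C \<union> ?D"
  proof (elim disjE bexE)
    fix P assume "P \<in> ell_points" "L \<in> plane_pencil P"
    then have "X = plane_pencil P" using X G_orbit_eq_plane_pencil by simp
    then show ?thesis using \<open>P \<in> ell_points\<close> by blast
  next
    fix i P assume i: "i \<in> {1..CARD('a) + 1}" "P \<in> ell_points" "L \<in> solid_pencil (Solid \<omega> i) P"
    then have "X = solid_pencil (Solid \<omega> i) P" using X G_orbit_eq_solid_pencil[OF abc] by simp
    then show ?thesis using i by blast
  qed (use X in blast)+
next
  have C: "ell_skew_lines S \<subseteq> {L \<in> pg_lines. L \<noteq> ellL}"
    and D: "pi_skew_lines \<subseteq> {L \<in> pg_lines. L \<noteq> ellL}" for S :: "('a ^ 5) set"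
    using ellL_not_in_classes(3,4) by (auto simp: ell_skew_lines_def pi_skew_lines_def)
  fix X assume "X \<in> ?A \<union> ?B \<union> ?C \<union> ?D"
  then show "X \<in> ?orbits"
  proof (elim UnE)
    assume "X \<in> ?A"
    then show ?thesis using plane_pencil_mem_G_orbits by blast
  next
    assume "X \<in> ?B"
    then show ?thesis using solid_pencil_mem_G_orbits[OF abc] by blast
  next
    assume "X \<in> ?C"
    then show ?thesis using C by blast
  next
    assume "X \<in> ?D"
    then show ?thesis using D by blast
  qed
qed

theorem lemma2p4:
  fixes a b c \<omega> :: "'a::{field,finite}"
  defines "q \<equiv> CARD('a)"
  assumes q_odd: "odd q"
    and prim: "primitive_element \<omega>"
    and irr: "irreducible [:c, b, a, 1:]"
  defines "Orb \<equiv> G_orbit a b c"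
    and "Pts \<equiv> {P. pg_point P \<and> P \<subseteq> ellL}"
    and "A \<equiv> \<lambda>P. {L \<in> pg_lines. L \<subseteq> piP \<and> P \<subseteq> L \<and> L \<noteq> ellL}"
    and "B \<equiv> \<lambda>i P. {L \<in> pg_lines. L \<subseteq> Solid \<omega> i \<and> P \<subseteq> L \<and> \<not> L \<subseteq> piP}"
    and "C \<equiv> \<lambda>i. {L \<in> pg_lines. L \<subseteq> Solid \<omega> i \<and> L \<inter> ellL = {0}
                                  \<and> pg_point (L \<inter> piP)}"
    and "D \<equiv> {L \<in> pg_lines. L \<inter> piP = {0}}"
  shows "({Orb L | L. L \<in> pg_lines \<and> L \<noteq> ellL} =
       (A ` Pts) \<union> {B i P | i P. i \<in> {1..q+1} \<and> P \<in> Pts}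
       \<union> (\<Union>i\<in>{1..q+1}. Orb ` C i) \<union> (Orb ` D)) \<and>
    (\<forall>P\<in>Pts. \<forall>L\<in>A P. Orb L = A P) \<and>
    (\<forall>P\<in>Pts. card (A P) = q) \<and>
    (card (A ` Pts) = q + 1) \<and>
    (\<forall>i\<in>{1..q+1}. \<forall>P\<in>Pts. \<forall>L\<in>B i P. Orb L = B i P) \<and>
    (\<forall>i\<in>{1..q+1}. \<forall>P\<in>Pts. card (B i P) = q^2) \<and>
    (card {B i P | i P. i \<in> {1..q+1} \<and> P \<in> Pts} = (q + 1)^2) \<and>
    (\<forall>i\<in>{1..q+1}. card (Orb ` C i) = q) \<and>
    (\<forall>i\<in>{1..q+1}. \<forall>L\<in>C i. card (Orb L) = q^3) \<and>
    (card (\<Union>i\<in>{1..q+1}. Orb ` C i) = q * (q + 1)) \<and>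
    (card (Orb ` D) = q^3) \<and>
    (\<forall>L\<in>D. card (Orb L) = q^3) \<and>
    (\<Union>(Orb ` D) = D) \<and>
    (\<forall>L\<in>D. \<forall>L1\<in>Orb L. \<forall>L2\<in>Orb L. L1 \<noteq> L2 \<longrightarrow> L1 \<inter> L2 = {0})"
proof -
  have abc: "anisotropic_cubic a b c"
    using q_odd irr unfolding q_def by (rule anisotropic_cubicI)
  have defs: "Pts = ell_points" "A = plane_pencil" "B = (\<lambda>i. solid_pencil (Solid \<omega> i))"
    "C = (\<lambda>i. ell_skew_lines (Solid \<omega> i))" "D = pi_skew_lines"
    unfolding Pts_def A_def B_def C_def D_def ell_points_def plane_pencil_def solid_pencil_def
      ell_skew_lines_def pi_skew_lines_def by (rule refl)+
  show ?thesis
    unfolding defs Orb_def q_def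
    by (intro conjI ballI impI;
        rule G_orbits_of_lines[OF abc prim] G_orbit_eq_plane_pencil card_plane_pencil_ell_point
          card_plane_pencils G_orbit_eq_solid_pencil[OF abc] card_solid_pencil_ell_point
          card_solid_pencils[OF prim] card_G_orbits_Solid_ell_skew_lines
          card_G_orbit_mem_ell_skew_lines_Solid card_Union_G_orbits_ell_skew_lines[OF prim]
          anisotropic_cubic.card_G_orbits_pi_skew_lines[OF abc] card_G_orbit_mem_pi_skew_lines[OF abc]
          Union_G_orbits_pi_skew_lines anisotropic_cubic.G_orbit_pi_skew_lines_disjoint[OF abc];
        assumption)
qed

end
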